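(* The family $\mathcal{L}_0$ contains four chains $\mathcal{K}_0,\mathcal{K}_1,\mathcal{K}_2,\mathcal{K}_3$ (with respect to $\subset$), each of size $\mathfrak{c}$, such that for each $i\in\{0,1,2,3\}$ all spaces $(\mathbb{R},\tau)$ with $\tau\in\mathcal{K}_i$ are pairwise homeomorphic, and: (i) for $\tau\in\mathcal{K}_0$ the space $(\mathbb{R},\tau)$ is second countable but not regular; (ii) for $\tau\in\mathcal{K}_1$ the space $(\mathbb{R},\tau)$ is neither regular nor first countable; (iii) for $\tau\in\mathcal{K}_2$ the space $(\mathbb{R},\tau)$ is completely normal but not first countable; (iv) for $\tau\in\mathcal{K}_3$ the space $(\mathbb{R},\tau)$ is completely metrizable; (v) $\mathcal{K}_0\cup\mathcal{K}_1\cup\mathcal{K}_2$ is a chain and for every $i\in\{0,1,2\}$ the chain $\mathcal{K}_i$ is dense in $\mathcal{K}_0\cup\mathcal{K}_1\cup\mathcal{K}_2$; (vi) every topology in $\mathcal{K}_0\cup\mathcal{K}_1\cup\mathcal{K}_2$ is a subset of every topology in $\mathcal{K}_3$.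
   Context: $\mathfrak{c}=|\mathbb{R}|$. $\eta$ denotes the Euclidean topology on $\mathbb{R}$. $\mathcal{L}$ denotes the family of all Hausdorff topologies $\tau$ on $\mathbb{R}$ with $\tau\subset\eta$. For $\tau\in\mathcal{L}$ and $a\in\mathbb{R}$ let $\mathcal{N}_\tau(a)$ be the neighborhood filter of $a$ in $(\mathbb{R},\tau)$; let $C(\tau)$ be the set of all $a\in\mathbb{R}$ with $\mathcal{N}_\tau(a)\neq\mathcal{N}_\eta(a)$. $\mathcal{L}_0:=\{\tau\in\mathcal{L}\mid C(\tau)\subset\{0\}\}$. A chain is a family of topologies totally ordered by inclusion. If $\mathcal{K}'\subset\mathcal{K}$ are chains, $\mathcal{K}'$ is dense in $\mathcal{K}$ if for every $X,Y\in\mathcal{K}$ with $X\subsetneq Y$ there is $Z\in\mathcal{K}'\setminus\{X,Y\}$ with $X\subset Z\subset Y$. *)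

theory Defs
  imports "HOL-Analysis.Analysis" "HOL-Library.Equipollence"
begin

definition top_le :: "'a topology \<Rightarrow> 'a topology \<Rightarrow> bool" where
  "top_le \<tau> \<sigma> \<longleftrightarrow> (\<forall>U. openin \<tau> U \<longrightarrow> openin \<sigma> U)"

definition L_family :: "real topology set" where
  "L_family = {\<tau>. topspace \<tau> = UNIV \<and> Hausdorff_space \<tau> \<and> top_le \<tau> euclideanreal}"

definition nbhds :: "'a topology \<Rightarrow> 'a \<Rightarrow> 'a set set" where
  "nbhds \<tau> a = {N. \<exists>U. openin \<tau> U \<and> a \<in> U \<and> U \<subseteq> N}"

definition C_set :: "real topology \<Rightarrow> real set" where
  "C_set \<tau> = {a. nbhds \<tau> a \<noteq> nbhds euclideanreal a}"

definition L0_family :: "real topology set" where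
  "L0_family = {\<tau> \<in> L_family. C_set \<tau> \<subseteq> {0}}"

definition top_chain :: "'a topology set \<Rightarrow> bool" where
  "top_chain K \<longleftrightarrow> (\<forall>X\<in>K. \<forall>Y\<in>K. top_le X Y \<or> top_le Y X)"

definition top_dense_in :: "'a topology set \<Rightarrow> 'a topology set \<Rightarrow> bool" where
  "top_dense_in K' K \<longleftrightarrow>
     (\<forall>X\<in>K. \<forall>Y\<in>K. top_le X Y \<and> X \<noteq> Y \<longrightarrow>
        (\<exists>Z\<in>K' - {X, Y}. top_le X Z \<and> top_le Z Y))"

end

theory Submission
  imports Defs
begin

(* All topologies below are gauge topologies: U is open iff it is Euclidean open and, when it
   contains 0, it also contains a sublevel set {x. rho x < e} of a gauge rho that vanishes only
   at 0.  Off 0 they coincide with the Euclidean topology, hence lie in L0.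

   For K0, K1, K2 the gauge makes 0 the limit at infinity of a set S of windows of radius r n
   around the block centres n + 1/2; the windows are open, half-open and closed respectively.
   The open right ends of open and half-open windows lie in the closure of S but outside a
   neighbourhood of 0, which defeats regularity; the closed left ends allow a diagonal argument
   against first countability; closed windows are compact pieces that can be thickened inside any
   neighbourhood of 0, which gives regularity, and Lindeloef subspaces give hereditary
   normality.  Eventually larger radii give a strictly coarser topology, so radii depending on a
   pair of parameters realise the lexicographic order, and parameters from three disjoint dense
   countable sets make the chains interleave densely.  Stretching every block piecewise linearly
   maps one window system onto another and gives the homeomorphisms.

   For K3 the gauge min |x| (infdist x C + 1/(1 + |x|)), with C the closed windows of a small
   constant radius s, is Lipschitz, and min (2 |x - y|) (rho x + rho y) is then a complete metric
   inducing the topology; windows of radius s < 1/5 make it finer than all of K0, K1, K2. *)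

section \<open>Gauge topologies\<close>

definition gauge_topology :: "('a::real_normed_vector \<Rightarrow> real) \<Rightarrow> 'a topology" where
  "gauge_topology \<rho> = topology (\<lambda>U. open U \<and> (0 \<in> U \<longrightarrow> (\<exists>e>0. {x. \<rho> x < e} \<subseteq> U)))"

lemma openin_gauge_topology:
  "openin (gauge_topology \<rho>) U \<longleftrightarrow> open U \<and> (0 \<in> U \<longrightarrow> (\<exists>e>0. {x. \<rho> x < e} \<subseteq> U))"
proof -
  define P where "P = (\<lambda>U. open U \<and> (0 \<in> U \<longrightarrow> (\<exists>e>0. {x. \<rho> x < e} \<subseteq> U)))"
  have "P (S \<inter> T)" if "P S" "P T" for S T
  proof -
    have "\<exists>e>0. {x. \<rho> x < e} \<subseteq> S \<inter> T" if "0 \<in> S \<inter> T"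
    proof -
      obtain e e' where "e > 0" "{x. \<rho> x < e} \<subseteq> S" "e' > 0" "{x. \<rho> x < e'} \<subseteq> T"
        using \<open>P S\<close> \<open>P T\<close> \<open>0 \<in> S \<inter> T\<close> by (auto simp: P_def)
      then show ?thesis
        by (intro exI[of _ "min e e'"]) auto
    qed
    then show ?thesis
      using that by (auto simp: P_def)
  qed
  moreover have "P (\<Union>\<K>)" if \<K>: "\<forall>S\<in>\<K>. P S" for \<K>
  proof -
    have "\<exists>e>0. {x. \<rho> x < e} \<subseteq> \<Union>\<K>" if z: "0 \<in> \<Union>\<K>"
    proof -
      obtain S where "S \<in> \<K>" "0 \<in> S"
        using z by blast
      then obtain e where "e > 0" "{x. \<rho> x < e} \<subseteq> S"
        using \<K> by (auto simp: P_def)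
      with \<open>S \<in> \<K>\<close> show ?thesis
        by blast
    qed
    then show ?thesis
      using \<K> by (auto simp: P_def)
  qed
  ultimately have "istopology P"
    by (simp add: istopology_def)
  then have "openin (topology P) = P"
    by (rule topology_inverse')
  then show ?thesis
    by (simp add: gauge_topology_def P_def)
qed

lemma topspace_gauge_topology [simp]: "topspace (gauge_topology \<rho>) = UNIV"
proof -
  have "openin (gauge_topology \<rho>) UNIV"
    by (auto simp: openin_gauge_topology intro: exI[of _ 1])
  then show ?thesis
    by (simp add: openin_subset subset_antisym)
qed

lemma openin_gauge_topology_if_zero_notin:
  "open U \<Longrightarrow> 0 \<notin> U \<Longrightarrow> openin (gauge_topology \<rho>) U"
  by (simp add: openin_gauge_topology)

lemma gauge_topology_le_euclidean: "top_le (gauge_topology \<rho>) euclidean"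
  by (simp add: top_le_def openin_gauge_topology)

definition gauge_compatible :: "('a \<Rightarrow> real) \<Rightarrow> ('b \<Rightarrow> real) \<Rightarrow> ('a \<Rightarrow> 'b) \<Rightarrow> bool" where
  "gauge_compatible \<rho> \<sigma> f \<longleftrightarrow> (\<forall>e>0. \<exists>d>0. \<forall>x. \<rho> x < d \<longrightarrow> \<sigma> (f x) < e)"

lemma continuous_map_gauge_topology:
  assumes "continuous_on UNIV f" "f 0 = 0" "gauge_compatible \<rho> \<sigma> f"
  shows "continuous_map (gauge_topology \<rho>) (gauge_topology \<sigma>) f"
  unfolding continuous_map_def
proof (intro conjI allI impI)
  fix U assume U: "openin (gauge_topology \<sigma>) U"
  have "openin (gauge_topology \<rho>) (f -` U)"
    unfolding openin_gauge_topology
  proof (intro conjI impI)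
    show "open (f -` U)"
      using U assms(1) by (simp add: openin_gauge_topology continuous_on_open_vimage)
    assume "0 \<in> f -` U"
    then obtain e where "e > 0" "{y. \<sigma> y < e} \<subseteq> U"
      using U assms(2) by (auto simp: openin_gauge_topology)
    then show "\<exists>d>0. {x. \<rho> x < d} \<subseteq> f -` U"
      using assms(3) unfolding gauge_compatible_def by fastforce
  qed
  then show "openin (gauge_topology \<rho>) {x \<in> topspace (gauge_topology \<rho>). f x \<in> U}"
    by (simp add: vimage_def)
qed auto

lemma gauge_topology_le:
  assumes "gauge_compatible \<rho> \<sigma> id"
  shows "top_le (gauge_topology \<sigma>) (gauge_topology \<rho>)"
  using continuous_map_gauge_topology[OF continuous_on_id' _ assms]
  by (auto simp: top_le_def continuous_map_def)

lemma not_gauge_topology_le: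
  assumes "openin (gauge_topology \<rho>) U" "0 \<in> U" "\<And>e. e > 0 \<Longrightarrow> \<exists>x. \<sigma> x < e \<and> x \<notin> U"
  shows "\<not> top_le (gauge_topology \<rho>) (gauge_topology \<sigma>)"
  using assms by (force simp: top_le_def openin_gauge_topology)

lemma homeomorphic_gauge_topologies:
  assumes "homeomorphism UNIV UNIV f g" "f 0 = 0"
    and "gauge_compatible \<rho> \<sigma> f" "gauge_compatible \<sigma> \<rho> g"
  shows "gauge_topology \<rho> homeomorphic_space gauge_topology \<sigma>"
proof -
  have "g 0 = 0"
    using assms(1,2) by (metis UNIV_I homeomorphism_apply1)
  then have "homeomorphic_maps (gauge_topology \<rho>) (gauge_topology \<sigma>) f g"
    using assms unfolding homeomorphic_maps_def homeomorphism_def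
    by (auto intro!: continuous_map_gauge_topology)
  then show ?thesis
    unfolding homeomorphic_space_def by blast
qed

definition bounded_below_off_zero :: "('a::real_normed_vector \<Rightarrow> real) \<Rightarrow> bool" where
  "bounded_below_off_zero \<rho> \<longleftrightarrow> (\<forall>a. a \<noteq> 0 \<longrightarrow> (\<exists>d>0. \<exists>c>0. \<forall>x\<in>ball a d. c \<le> \<rho> x))"

lemma openin_gauge_topology_compl_cball:
  assumes "bounded_below_off_zero \<rho>" "a \<noteq> 0"
  obtains d where "d > 0" "\<And>e. e < d \<Longrightarrow> openin (gauge_topology \<rho>) (- cball a e)"
proof -
  obtain d c where "d > 0" "c > 0" and c: "\<And>x. x \<in> ball a d \<Longrightarrow> c \<le> \<rho> x"
    using assms unfolding bounded_below_off_zero_def by blast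
  have "openin (gauge_topology \<rho>) (- cball a e)" if "e < d" for e
  proof -
    have "{x. \<rho> x < c} \<subseteq> - cball a e"
    proof
      fix x assume x: "x \<in> {x. \<rho> x < c}"
      show "x \<in> - cball a e"
      proof
        assume "x \<in> cball a e"
        then have "x \<in> ball a d"
          using \<open>e < d\<close> by simp
        then show False
          using c x by fastforce
      qed
    qed
    then show ?thesis
      using \<open>c > 0\<close> by (auto simp: openin_gauge_topology)
  qed
  with \<open>d > 0\<close> show ?thesis
    using that by blast
qed

lemma gauge_topology_separates_nonzero:
  assumes "bounded_below_off_zero \<rho>" "closedin (gauge_topology \<rho>) F" "a \<noteq> 0" "a \<notin> F"
  obtains U V where "openin (gauge_topology \<rho>) U" "openin (gauge_topology \<rho>) V"
    "a \<in> U" "F \<subseteq> V" "disjnt U V"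
proof -
  have "open (- F)"
    using assms(2) by (simp add: closedin_def openin_gauge_topology Compl_eq_Diff_UNIV)
  then obtain e0 where "e0 > 0" "ball a e0 \<subseteq> - F"
    using assms(4) open_contains_ball by blast
  obtain d where "d > 0" and d: "\<And>e. e < d \<Longrightarrow> openin (gauge_topology \<rho>) (- cball a e)"
    using openin_gauge_topology_compl_cball assms(1,3) by blast
  define e where "e = min e0 (min d (norm a)) / 2"
  have e: "0 < e" "e < d" "e < norm a" "e < e0"
    using \<open>e0 > 0\<close> \<open>d > 0\<close> assms(3) by (auto simp: e_def min_def)
  show ?thesis
  proof (rule that[of "ball a e" "- cball a e"])
    show "openin (gauge_topology \<rho>) (ball a e)"
      using e by (intro openin_gauge_topology_if_zero_notin) (auto simp: dist_norm)
    have "cball a e \<subseteq> ball a e0"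
      using e by auto
    then show "F \<subseteq> - cball a e"
      using \<open>ball a e0 \<subseteq> - F\<close> by blast
  qed (use d e in \<open>auto simp: disjnt_def\<close>)
qed

lemma closedin_gauge_topology_singleton:
  assumes "bounded_below_off_zero \<rho>"
  shows "closedin (gauge_topology \<rho>) {a}"
proof -
  have *: "\<exists>c>0. {x. \<rho> x < c} \<subseteq> - {a}" if a: "a \<noteq> 0"
  proof -
    obtain d c where "d > 0" "c > 0" "\<And>x. x \<in> ball a d \<Longrightarrow> c \<le> \<rho> x"
      using assms a unfolding bounded_below_off_zero_def by blast
    then have "c \<le> \<rho> a"
      by simp
    with \<open>c > 0\<close> show ?thesis
      by (intro exI[of _ c]) auto
  qed
  have "openin (gauge_topology \<rho>) (- {a})"
    unfolding openin_gauge_topology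
  proof (intro conjI impI)
    show "open (- {a})"
      by (simp add: open_Compl)
    assume "0 \<in> - {a}"
    then show "\<exists>e>0. {x. \<rho> x < e} \<subseteq> - {a}"
      using * by simp
  qed
  then show ?thesis
    by (simp add: closedin_def Compl_eq_Diff_UNIV[symmetric])
qed

lemma Hausdorff_gauge_topology:
  assumes "bounded_below_off_zero \<rho>"
  shows "Hausdorff_space (gauge_topology \<rho>)"
  unfolding Hausdorff_space_def
proof (intro allI impI)
  have sep: "\<exists>U V. openin (gauge_topology \<rho>) U \<and> openin (gauge_topology \<rho>) V \<and>
      x \<in> U \<and> y \<in> V \<and> disjnt U V" if xy: "x \<noteq> y" and x0: "x \<noteq> 0" for x y
  proof -
    have "x \<notin> {y}"
      using xy by simp
    obtain U V where "openin (gauge_topology \<rho>) U" "openin (gauge_topology \<rho>) V"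
      "x \<in> U" "{y} \<subseteq> V" "disjnt U V"
      by (rule gauge_topology_separates_nonzero[OF assms closedin_gauge_topology_singleton[OF assms]
            x0 \<open>x \<notin> {y}\<close>])
    then show ?thesis
      by blast
  qed
  fix x y assume "x \<in> topspace (gauge_topology \<rho>) \<and> y \<in> topspace (gauge_topology \<rho>) \<and> x \<noteq> y"
  then have "x \<noteq> y"
    by simp
  show "\<exists>U V. openin (gauge_topology \<rho>) U \<and> openin (gauge_topology \<rho>) V \<and>
      x \<in> U \<and> y \<in> V \<and> disjnt U V"
  proof (cases "x = 0")
    case True
    then obtain U V where "openin (gauge_topology \<rho>) U" "openin (gauge_topology \<rho>) V"
      "y \<in> U" "x \<in> V" "disjnt U V"
      using sep[of y x] \<open>x \<noteq> y\<close> by auto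
    then show ?thesis
      using disjnt_sym by blast
  qed (use sep \<open>x \<noteq> y\<close> in blast)
qed

lemma nbhds_gauge_topology:
  assumes "a \<noteq> 0"
  shows "nbhds (gauge_topology \<rho>) a = nbhds euclidean a"
proof (intro set_eqI iffI)
  fix N assume "N \<in> nbhds (gauge_topology \<rho>) a"
  then show "N \<in> nbhds euclidean a"
    by (auto simp: nbhds_def openin_gauge_topology)
next
  fix N assume "N \<in> nbhds euclidean a"
  then obtain U where U: "open U" "a \<in> U" "U \<subseteq> N"
    by (auto simp: nbhds_def)
  have "openin (gauge_topology \<rho>) (U \<inter> ball a (norm a))"
    using U(1) by (intro openin_gauge_topology_if_zero_notin) auto
  then show "N \<in> nbhds (gauge_topology \<rho>) a"
    unfolding nbhds_def using U assms by auto
qed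

lemma gauge_topology_in_L0_family:
  fixes \<rho> :: "real \<Rightarrow> real"
  assumes "bounded_below_off_zero \<rho>"
  shows "gauge_topology \<rho> \<in> L0_family"
  using Hausdorff_gauge_topology[OF assms] gauge_topology_le_euclidean nbhds_gauge_topology
  by (auto simp: L0_family_def L_family_def C_set_def)

lemma Lindelof_space_subtopology_if_coarser:
  fixes X :: "'a::second_countable_topology topology"
  assumes "top_le X euclidean"
  shows "Lindelof_space (subtopology X S)"
  unfolding Lindelof_space_subtopology
proof (intro allI impI)
  fix \<U> assume \<U>: "(\<forall>U\<in>\<U>. openin X U) \<and> topspace X \<inter> S \<subseteq> \<Union>\<U>"
  have "open U" if "U \<in> \<U>" for U
  proof -
    have "openin X U"
      using \<U> that by blast
    then show ?thesis
      using assms unfolding top_le_def by simp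
  qed
  then obtain \<V> where "\<V> \<subseteq> \<U>" "countable \<V>" "\<Union>\<V> = \<Union>\<U>"
    by (rule Lindelof)
  moreover have "topspace X \<inter> S \<subseteq> \<Union>\<V>"
    using \<U> \<open>\<Union>\<V> = \<Union>\<U>\<close> by simp
  ultimately show "\<exists>\<V>. countable \<V> \<and> \<V> \<subseteq> \<U> \<and> topspace X \<inter> S \<subseteq> \<Union>\<V>"
    by (intro exI[of _ \<V>]) simp
qed

lemma hereditarily_normal_if_regular_coarser:
  fixes X :: "'a::second_countable_topology topology"
  assumes "regular_space X" "top_le X euclidean"
  shows "hereditarily normal_space X"
  unfolding hereditarily
proof
  fix S
  show "normal_space (subtopology X S)"
    using regular_space_subtopology[OF assms(1)] Lindelof_space_subtopology_if_coarser[OF assms(2)]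
    by (rule regular_Lindelof_imp_normal_space)
qed

locale lipschitz_gauge =
  fixes C :: real and \<rho> :: "'a::banach \<Rightarrow> real"
  assumes C_pos: "0 < C"
    and gauge_zero: "\<rho> 0 = 0"
    and gauge_pos: "\<And>x. x \<noteq> 0 \<Longrightarrow> 0 < \<rho> x"
    and gauge_lipschitz: "C-lipschitz_on UNIV \<rho>"
begin

lemma gauge_nonneg: "0 \<le> \<rho> x"
  using gauge_pos[of x] gauge_zero by (cases "x = 0") auto

lemma gauge_le: "\<rho> x \<le> \<rho> y + C * dist x y"
  using lipschitz_onD[OF gauge_lipschitz UNIV_I UNIV_I, of x y] by (simp add: dist_real_def)

lemma bounded_below_off_zero_gauge: "bounded_below_off_zero \<rho>"
  unfolding bounded_below_off_zero_def
proof (intro allI impI)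
  fix a :: 'a assume "a \<noteq> 0"
  then have "0 < \<rho> a"
    by (rule gauge_pos)
  have "\<rho> a / 2 \<le> \<rho> x" if "x \<in> ball a (\<rho> a / (2 * C))" for x
  proof -
    have "C * dist a x \<le> \<rho> a / 2"
      using that C_pos by (simp add: field_simps)
    then show ?thesis
      using gauge_le[of a x] by linarith
  qed
  with \<open>0 < \<rho> a\<close> C_pos show "\<exists>d>0. \<exists>c>0. \<forall>x\<in>ball a d. c \<le> \<rho> x"
    by (intro exI[of _ "\<rho> a / (2 * C)"] conjI exI[of _ "\<rho> a / 2"]) auto
qed

(* The Lipschitz bound on rho is what makes this a metric: it gives the mixed triangle inequalities. *)
definition gauge_metric :: "'a \<Rightarrow> 'a \<Rightarrow> real" where
  "gauge_metric x y = min (C * dist x y) (\<rho> x + \<rho> y)"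

lemma gauge_metric_le_dist: "gauge_metric x y \<le> C * dist x y"
  by (simp add: gauge_metric_def)

lemma gauge_metric_le_gauge: "gauge_metric x y \<le> \<rho> x + \<rho> y"
  by (simp add: gauge_metric_def)

lemma gauge_metric_eq_dist: "gauge_metric x y < \<rho> x \<Longrightarrow> gauge_metric x y = C * dist x y"
  using gauge_nonneg[of y] by (auto simp: gauge_metric_def min_def split: if_splits)

sublocale Metric_space UNIV gauge_metric
proof
  fix x y z :: 'a
  show "0 \<le> gauge_metric x y"
    using C_pos gauge_nonneg[of x] gauge_nonneg[of y] by (simp add: gauge_metric_def)
  show "gauge_metric x y = gauge_metric y x"
    by (simp add: gauge_metric_def dist_commute add.commute)
  show "gauge_metric x y = 0 \<longleftrightarrow> x = y"
  proof
    assume "gauge_metric x y = 0"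
    then have "C * dist x y = 0 \<or> \<rho> x + \<rho> y = 0"
      by (auto simp: gauge_metric_def min_def split: if_splits)
    then show "x = y"
    proof
      assume "\<rho> x + \<rho> y = 0"
      then have "\<rho> x = 0" "\<rho> y = 0"
        using gauge_nonneg[of x] gauge_nonneg[of y] by linarith+
      then show "x = y"
        using gauge_pos[of x] gauge_pos[of y] by fastforce
    qed (use C_pos in simp)
  qed (use gauge_nonneg[of y] in \<open>simp add: gauge_metric_def\<close>)
  have "C * dist x z \<le> C * dist x y + C * dist y z"
    using mult_left_mono[OF dist_triangle[of x z y]] C_pos by (simp add: distrib_left)
  then have "gauge_metric x z \<le> C * dist x y + C * dist y z"
    using gauge_metric_le_dist[of x z] by linarith
  moreover have "gauge_metric x z \<le> (\<rho> x + \<rho> y) + (\<rho> y + \<rho> z)"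
    using gauge_metric_le_gauge[of x z] gauge_nonneg[of y] by linarith
  moreover have "gauge_metric x z \<le> C * dist x y + (\<rho> y + \<rho> z)"
    using gauge_metric_le_gauge[of x z] gauge_le[of x y] by linarith
  moreover have "gauge_metric x z \<le> (\<rho> x + \<rho> y) + C * dist y z"
    using gauge_metric_le_gauge[of x z] gauge_le[of z y] by (simp add: dist_commute)
  ultimately show "gauge_metric x z \<le> gauge_metric x y + gauge_metric y z"
    unfolding gauge_metric_def[of x y] gauge_metric_def[of y z] by (simp add: min_def)
qed

lemma mball_subset_if_openin_gauge_topology:
  assumes U: "openin (gauge_topology \<rho>) U" and "x \<in> U"
  obtains r where "r > 0" "mball x r \<subseteq> U"
proof -
  obtain e where "e > 0" "ball x e \<subseteq> U"
    using U \<open>x \<in> U\<close> by (meson openin_gauge_topology open_contains_ball)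
  show ?thesis
  proof (cases "x = 0")
    case False
    have "mball x (min (C * e) (\<rho> x)) \<subseteq> U"
    proof
      fix y assume "y \<in> mball x (min (C * e) (\<rho> x))"
      then have "gauge_metric x y = C * dist x y" "gauge_metric x y < C * e"
        using gauge_metric_eq_dist by auto
      then show "y \<in> U"
        using C_pos \<open>ball x e \<subseteq> U\<close> by auto
    qed
    moreover have "0 < min (C * e) (\<rho> x)"
      using \<open>e > 0\<close> C_pos gauge_pos[OF False] by simp
    ultimately show ?thesis
      using that by blast
  next
    case True
    then obtain \<epsilon> where "\<epsilon> > 0" "{y. \<rho> y < \<epsilon>} \<subseteq> U"
      using U \<open>x \<in> U\<close> by (auto simp: openin_gauge_topology)
    have "mball x (min (C * e) \<epsilon>) \<subseteq> U"
    proof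
      fix y assume "y \<in> mball x (min (C * e) \<epsilon>)"
      then have "C * dist x y < C * e \<or> \<rho> y < \<epsilon>"
        using True gauge_zero by (auto simp: gauge_metric_def min_def split: if_splits)
      then show "y \<in> U"
        using C_pos \<open>ball x e \<subseteq> U\<close> \<open>{y. \<rho> y < \<epsilon>} \<subseteq> U\<close> by auto
    qed
    moreover have "0 < min (C * e) \<epsilon>"
      using \<open>e > 0\<close> \<open>\<epsilon> > 0\<close> C_pos by simp
    ultimately show ?thesis
      using that by blast
  qed
qed

lemma openin_gauge_topology_if_openin_mtopology:
  assumes U: "openin mtopology U"
  shows "openin (gauge_topology \<rho>) U"
proof -
  have "open U"
  proof (rule openI)
    fix x assume "x \<in> U"
    then obtain r where "r > 0" "mball x r \<subseteq> U"
      using U by (auto simp: openin_mtopology)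
    have "ball x (r / C) \<subseteq> mball x r"
    proof
      fix y assume "y \<in> ball x (r / C)"
      then have "C * dist x y < r"
        using C_pos by (simp add: field_simps)
      then show "y \<in> mball x r"
        using gauge_metric_le_dist[of x y] by simp
    qed
    then show "\<exists>\<epsilon>>0. ball x \<epsilon> \<subseteq> U"
      using \<open>r > 0\<close> C_pos \<open>mball x r \<subseteq> U\<close> by (intro exI[of _ "r / C"]) auto
  qed
  moreover have "\<exists>e>0. {y. \<rho> y < e} \<subseteq> U" if U0: "0 \<in> U"
  proof -
    obtain r where "r > 0" "mball 0 r \<subseteq> U"
      using U U0 by (auto simp: openin_mtopology)
    moreover have "{y. \<rho> y < r} \<subseteq> mball 0 r"
    proof
      fix y assume "y \<in> {y. \<rho> y < r}"
      then show "y \<in> mball 0 r"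
        using gauge_metric_le_gauge[of 0 y] gauge_zero by simp
    qed
    ultimately show ?thesis
      by (intro exI[of _ r]) auto
  qed
  ultimately show ?thesis
    by (simp add: openin_gauge_topology)
qed

lemma gauge_topology_eq_mtopology: "gauge_topology \<rho> = mtopology"
  unfolding topology_eq openin_mtopology
  by (meson mball_subset_if_openin_gauge_topology openin_gauge_topology_if_openin_mtopology
      openin_mtopology subset_UNIV)

lemma limitin_mtopology_if_tendsto:
  assumes "\<sigma> \<longlonglongrightarrow> L"
  shows "limitin mtopology \<sigma> L sequentially"
  unfolding limitin_metric
proof (intro conjI allI impI)
  fix \<epsilon> :: real assume "\<epsilon> > 0"
  then have "eventually (\<lambda>n. dist (\<sigma> n) L < \<epsilon> / C) sequentially"
    using assms C_pos by (simp add: tendsto_iff)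
  then show "eventually (\<lambda>n. \<sigma> n \<in> UNIV \<and> gauge_metric (\<sigma> n) L < \<epsilon>) sequentially"
  proof eventually_elim
    case (elim n)
    then show ?case
      using gauge_metric_le_dist[of "\<sigma> n" L] C_pos by (simp add: field_simps)
  qed
qed simp

lemma Cauchy_if_MCauchy_bounded_below:
  assumes "MCauchy \<sigma>" "e > 0" "\<And>n. n \<ge> N0 \<Longrightarrow> e \<le> \<rho> (\<sigma> n)"
  shows "Cauchy \<sigma>"
proof (rule metric_CauchyI)
  fix \<epsilon> :: real assume "\<epsilon> > 0"
  then obtain N where N: "\<And>m n. N \<le> m \<Longrightarrow> N \<le> n \<Longrightarrow> gauge_metric (\<sigma> m) (\<sigma> n) < min (C * \<epsilon>) e"
    using assms(1,2) C_pos unfolding MCauchy_def by (metis min_less_iff_conj mult_pos_pos)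
  have "dist (\<sigma> m) (\<sigma> n) < \<epsilon>" if "max N N0 \<le> m" "max N N0 \<le> n" for m n
  proof -
    have "gauge_metric (\<sigma> m) (\<sigma> n) < \<rho> (\<sigma> m)"
      using N[of m n] assms(3)[of m] that by fastforce
    then have "C * dist (\<sigma> m) (\<sigma> n) < C * \<epsilon>"
      using N[of m n] that gauge_metric_eq_dist by fastforce
    then show ?thesis
      using C_pos by simp
  qed
  then show "\<exists>M. \<forall>m\<ge>M. \<forall>n\<ge>M. dist (\<sigma> m) (\<sigma> n) < \<epsilon>"
    by (intro exI[of _ "max N N0"]) simp
qed

lemma limitin_zero_if_MCauchy_frequently_small:
  assumes "MCauchy \<sigma>" "\<And>e N. e > 0 \<Longrightarrow> \<exists>n\<ge>N. \<rho> (\<sigma> n) < e"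
  shows "limitin mtopology \<sigma> 0 sequentially"
  unfolding limitin_metric
proof (intro conjI allI impI)
  fix \<epsilon> :: real assume "\<epsilon> > 0"
  then obtain N where N: "\<And>m n. N \<le> m \<Longrightarrow> N \<le> n \<Longrightarrow> gauge_metric (\<sigma> m) (\<sigma> n) < \<epsilon> / 2"
    using assms(1) unfolding MCauchy_def by (meson half_gt_zero)
  obtain n where "n \<ge> N" "\<rho> (\<sigma> n) < \<epsilon> / 2"
    using assms(2) \<open>\<epsilon> > 0\<close> by (meson half_gt_zero)
  have "gauge_metric (\<sigma> m) 0 < \<epsilon>" if "m \<ge> N" for m
  proof -
    have "gauge_metric (\<sigma> m) 0 \<le> gauge_metric (\<sigma> m) (\<sigma> n) + gauge_metric (\<sigma> n) 0"
      by (rule triangle) auto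
    moreover have "gauge_metric (\<sigma> n) 0 \<le> \<rho> (\<sigma> n)"
      using gauge_metric_le_gauge[of "\<sigma> n" 0] gauge_zero by simp
    ultimately show ?thesis
      using N[OF that \<open>n \<ge> N\<close>] \<open>\<rho> (\<sigma> n) < \<epsilon> / 2\<close> by linarith
  qed
  then show "eventually (\<lambda>m. \<sigma> m \<in> UNIV \<and> gauge_metric (\<sigma> m) 0 < \<epsilon>) sequentially"
    unfolding eventually_sequentially by blast
qed simp

lemma mcomplete_gauge_metric: mcomplete
  unfolding mcomplete_def
proof (intro allI impI)
  fix \<sigma> assume "MCauchy \<sigma>"
  show "\<exists>x. limitin mtopology \<sigma> x sequentially"
  proof (cases "\<exists>e>0. \<exists>N0. \<forall>n\<ge>N0. e \<le> \<rho> (\<sigma> n)")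
    case True
    then obtain e N0 where "e > 0" "\<And>n. n \<ge> N0 \<Longrightarrow> e \<le> \<rho> (\<sigma> n)"
      by blast
    then have "Cauchy \<sigma>"
      using Cauchy_if_MCauchy_bounded_below \<open>MCauchy \<sigma>\<close> by blast
    then obtain L where "\<sigma> \<longlonglongrightarrow> L"
      using Cauchy_convergent_iff convergent_def by blast
    then show ?thesis
      using limitin_mtopology_if_tendsto by blast
  next
    case False
    then have "\<exists>n\<ge>N. \<rho> (\<sigma> n) < e" if "e > 0" for e N
      using that by (meson not_le)
    then show ?thesis
      using limitin_zero_if_MCauchy_frequently_small \<open>MCauchy \<sigma>\<close> by blast
  qed
qed

theorem completely_metrizable_gauge_topology: "completely_metrizable_space (gauge_topology \<rho>)"
  unfolding completely_metrizable_space_def gauge_topology_eq_mtopology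
  using Metric_space_axioms mcomplete_gauge_metric by blast

end

definition block_index :: "real \<Rightarrow> nat" where
  "block_index x = nat \<lfloor>x\<rfloor>"

definition block_offset :: "real \<Rightarrow> real" where
  "block_offset x = x - \<lfloor>x\<rfloor> - 1/2"

lemma block_offset_bounds: "-1/2 \<le> block_offset x" "block_offset x < 1/2"
  unfolding block_offset_def by linarith+

lemma block_coordinates:
  assumes "-1/2 \<le> v" "v < 1/2"
  shows "block_index (real n + 1/2 + v) = n" "block_offset (real n + 1/2 + v) = v"
proof -
  have "\<lfloor>real n + 1/2 + v\<rfloor> = int n"
    using assms by (intro floor_unique) auto
  then show "block_index (real n + 1/2 + v) = n" "block_offset (real n + 1/2 + v) = v"
    by (simp_all add: block_index_def block_offset_def)
qed

lemma block_decomposition: "0 \<le> x \<Longrightarrow> x = real (block_index x) + 1/2 + block_offset x"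
  by (simp add: block_index_def block_offset_def)

lemma one_le_block_index: "1 \<le> x \<Longrightarrow> 1 \<le> block_index x"
  by (simp add: block_index_def le_nat_iff)

lemma block_index_gt: "real M + 1 < x \<Longrightarrow> M < block_index x"
  unfolding block_index_def by linarith

lemma same_block:
  assumes "\<lfloor>x\<rfloor> = \<lfloor>y\<rfloor>"
  shows "block_index x = block_index y" "block_offset x - block_offset y = x - y"
  using assms by (simp_all add: block_index_def block_offset_def)

section \<open>Piecewise linear stretching of the offsets\<close>

lemma homeomorphism_strict_mono_inverse:
  fixes f g :: "real \<Rightarrow> real"
  assumes "strict_mono f" "\<And>x. g (f x) = x" "\<And>y. f (g y) = y"
  shows "homeomorphism UNIV UNIV f g"
proof -
  have "range f = UNIV" "range g = UNIV"
    using assms(2,3) by (metis surj_def)+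
  moreover have "g x \<le> g y" if "x \<le> y" for x y
    using that assms by (metis not_le strict_mono_less)
  moreover have "f x \<le> f y" if "x \<le> y" for x y
    using that assms(1) by (simp add: strict_mono_less_eq)
  ultimately have "continuous_on UNIV f" "continuous_on UNIV g"
    by (auto intro!: continuous_onI_mono)
  then show ?thesis
    using assms(2,3) \<open>range f = UNIV\<close> \<open>range g = UNIV\<close> by (simp add: homeomorphism_def)
qed

lemma lipschitz_on_affine:
  fixes c :: real
  assumes "0 \<le> c"
  shows "c-lipschitz_on S (\<lambda>u. c * (u - p) + q)"
proof (rule lipschitz_onI)
  fix x y :: real
  have "c * (x - p) + q - (c * (y - p) + q) = c * (x - y)"
    by (simp add: algebra_simps)
  then show "dist (c * (x - p) + q) (c * (y - p) + q) \<le> c * dist x y"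
    using assms by (simp add: dist_real_def abs_mult)
qed (rule assms)

definition stretch_slope :: "real \<Rightarrow> real \<Rightarrow> real" where
  "stretch_slope a b = (1/2 - b) / (1/2 - a)"

definition stretch :: "real \<Rightarrow> real \<Rightarrow> real \<Rightarrow> real" where
  "stretch a b u =
     (if u \<le> a then if u \<le> -a then stretch_slope a b * (u + a) - b else b / a * u
      else stretch_slope a b * (u - a) + b)"

context
  fixes a b :: real
  assumes a: "0 < a" "a < 1/2" and b: "0 < b" "b < 1/2"
begin

private lemma slopes_pos: "0 < stretch_slope a b" "0 < b / a"
  using a b by (auto simp: stretch_slope_def)

private lemma stretch_pieces:
  "u \<le> -a \<Longrightarrow> stretch a b u \<le> -b"
  "-a < u \<Longrightarrow> u \<le> a \<Longrightarrow> -b < stretch a b u \<and> stretch a b u \<le> b"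
  "a < u \<Longrightarrow> b < stretch a b u"
proof -
  assume "u \<le> -a"
  then have "stretch_slope a b * (u + a) \<le> 0"
    using slopes_pos by (intro mult_nonneg_nonpos) auto
  then show "stretch a b u \<le> -b"
    using \<open>u \<le> -a\<close> a by (simp add: stretch_def)
next
  assume "-a < u" "u \<le> a"
  then have "b / a * (-a) < b / a * u" "b / a * u \<le> b / a * a"
    using slopes_pos by (simp_all only: mult_less_cancel_left_pos mult_le_cancel_left_pos)
  then show "-b < stretch a b u \<and> stretch a b u \<le> b"
    using a \<open>u \<le> a\<close> \<open>-a < u\<close> by (simp add: stretch_def)
next
  assume "a < u"
  then show "b < stretch a b u"
    using slopes_pos by (simp add: stretch_def)
qed

lemma stretch_values:
  "stretch a b a = b" "stretch a b (-a) = -b" "stretch a b (1/2) = 1/2" "stretch a b (- (1/2)) = - (1/2)"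
  using a b by (auto simp: stretch_def stretch_slope_def field_simps)

lemma strict_mono_stretch: "strict_mono (stretch a b)"
proof (rule strict_monoI)
  fix u w :: real assume "u < w"
  consider "w \<le> -a" | "-a < w" "w \<le> a" "-a < u" | "a < u" | "u \<le> -a" "-a < w" | "u \<le> a" "a < w"
    by linarith
  then show "stretch a b u < stretch a b w"
  proof cases
    case 1
    then show ?thesis
      using \<open>u < w\<close> slopes_pos a by (simp add: stretch_def)
  next
    case 2
    have "b / a * u < b / a * w"
      using \<open>u < w\<close> slopes_pos by (intro mult_strict_left_mono)
    then show ?thesis
      using 2 \<open>u < w\<close> a by (simp add: stretch_def)
  next
    case 3
    then show ?thesis
      using \<open>u < w\<close> slopes_pos a by (simp add: stretch_def)
  next
    case 4
    have "-b < stretch a b w"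
      using stretch_pieces(2)[of w] stretch_pieces(3)[of w] 4 b by (cases "w \<le> a") auto
    then show ?thesis
      using stretch_pieces(1)[of u] 4 by simp
  next
    case 5
    have "stretch a b u \<le> b"
      using stretch_pieces(1)[of u] stretch_pieces(2)[of u] 5 b by (cases "u \<le> -a") auto
    then show ?thesis
      using stretch_pieces(3)[of w] 5 by simp
  qed
qed

lemma stretch_inverse: "stretch b a (stretch a b u) = u"
proof -
  have inv: "stretch_slope b a * stretch_slope a b = 1"
    using a b by (simp add: stretch_slope_def)
  consider "u \<le> -a" | "-a < u" "u \<le> a" | "a < u"
    by linarith
  then show ?thesis
  proof cases
    case 1
    then have "stretch b a (stretch a b u) = stretch_slope b a * stretch_slope a b * (u + a) - a"
      using stretch_pieces(1)[OF 1] 1 a b by (simp add: stretch_def[of b a] stretch_def[of a b])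
    then show ?thesis
      using inv by simp
  next
    case 2
    then show ?thesis
      using stretch_pieces(2)[OF 2] a b by (simp add: stretch_def[of b a] stretch_def[of a b])
  next
    case 3
    then have "stretch b a (stretch a b u) = stretch_slope b a * stretch_slope a b * (u - a) + a"
      using stretch_pieces(3)[OF 3] 3 a b by (simp add: stretch_def[of b a] stretch_def[of a b])
    then show ?thesis
      using inv by simp
  qed
qed

lemma lipschitz_stretch: "(max (stretch_slope a b) (b / a))-lipschitz_on {-1/2..1/2} (stretch a b)"
proof -
  define k where "k = stretch_slope a b"
  define m where "m = b / a"
  have "0 \<le> k" "0 \<le> m"
    using slopes_pos by (simp_all add: k_def m_def)
  have "k-lipschitz_on {-1/2..-a} (\<lambda>u. k * (u + a) - b)"
    using lipschitz_on_affine[OF \<open>0 \<le> k\<close>, of _ "-a" "-b"] by simp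
  moreover have "m-lipschitz_on {-a..a} (\<lambda>u. m * u)"
    using lipschitz_on_affine[OF \<open>0 \<le> m\<close>, of _ 0 0] by simp
  moreover have "k * (-a + a) - b = m * (-a)"
    using a by (simp add: m_def)
  ultimately have "(max k m)-lipschitz_on {-1/2..a} (\<lambda>u. if u \<le> -a then k * (u + a) - b else m * u)"
    by (rule lipschitz_on_concat_max)
  moreover have "k-lipschitz_on {a..1/2} (\<lambda>u. k * (u - a) + b)"
    using lipschitz_on_affine[OF \<open>0 \<le> k\<close>] by simp
  moreover have "(if a \<le> -a then k * (a + a) - b else m * a) = k * (a - a) + b"
    using a by (simp add: m_def)
  ultimately have "(max (max k m) k)-lipschitz_on {-1/2..1/2}
      (\<lambda>u. if u \<le> a then (if u \<le> -a then k * (u + a) - b else m * u) else k * (u - a) + b)"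
    by (rule lipschitz_on_concat_max)
  moreover have "(\<lambda>u. if u \<le> a then (if u \<le> -a then k * (u + a) - b else m * u)
      else k * (u - a) + b) = stretch a b"
    by (auto simp: fun_eq_iff stretch_def k_def m_def)
  moreover have "max (max k m) k = max (stretch_slope a b) (b / a)"
    by (simp add: k_def m_def max.commute max.left_commute)
  ultimately show ?thesis
    by metis
qed

end

(* The bound 2/5 keeps every window, and a margin of 1/20 around it, inside its block. *)
definition admissible_radii :: "(nat \<Rightarrow> real) \<Rightarrow> bool" where
  "admissible_radii r \<longleftrightarrow> (\<forall>n. 0 < r n \<and> r n \<le> 2/5)"

lemma admissible_radiiD:
  assumes "admissible_radii r"
  shows "0 < r n" "r n \<le> 2/5" "r n < 1/2"
  using assms by (auto simp: admissible_radii_def dest: spec[of _ n])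

definition block_stretch :: "(nat \<Rightarrow> real) \<Rightarrow> (nat \<Rightarrow> real) \<Rightarrow> real \<Rightarrow> real" where
  "block_stretch r r' x =
     (if x < 1 then x
      else real (block_index x) + 1/2 + stretch (r (block_index x)) (r' (block_index x)) (block_offset x))"

lemma block_stretch_eq_self: "x < 1 \<Longrightarrow> block_stretch r r' x = x"
  by (simp add: block_stretch_def)

context
  fixes r r' :: "nat \<Rightarrow> real"
  assumes r: "admissible_radii r" and r': "admissible_radii r'"
begin

private lemma stretch_radii:
  "strict_mono (stretch (r n) (r' n))"
  "stretch (r n) (r' n) (1/2) = 1/2" "stretch (r n) (r' n) (- (1/2)) = - (1/2)"
  "stretch (r n) (r' n) (r n) = r' n" "stretch (r n) (r' n) (- r n) = - r' n"
  "stretch (r' n) (r n) (stretch (r n) (r' n) u) = u"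
proof -
  have b: "0 < r n" "r n < 1/2" "0 < r' n" "r' n < 1/2"
    using admissible_radiiD[OF r] admissible_radiiD[OF r'] by auto
  show "strict_mono (stretch (r n) (r' n))"
    by (rule strict_mono_stretch[OF b])
  show "stretch (r n) (r' n) (1/2) = 1/2" "stretch (r n) (r' n) (- (1/2)) = - (1/2)"
    "stretch (r n) (r' n) (r n) = r' n" "stretch (r n) (r' n) (- r n) = - r' n"
    using stretch_values[OF b] by simp_all
  show "stretch (r' n) (r n) (stretch (r n) (r' n) u) = u"
    by (rule stretch_inverse[OF b])
qed

lemma block_stretch_coordinates:
  assumes "1 \<le> x"
  shows "\<lfloor>block_stretch r r' x\<rfloor> = \<lfloor>x\<rfloor>"
    and "block_index (block_stretch r r' x) = block_index x"
    and "block_offset (block_stretch r r' x) = stretch (r (block_index x)) (r' (block_index x)) (block_offset x)"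
    and "1 \<le> block_stretch r r' x"
proof -
  define n where "n = block_index x"
  define v where "v = stretch (r n) (r' n) (block_offset x)"
  have "stretch (r n) (r' n) (-1/2) \<le> v" "v < stretch (r n) (r' n) (1/2)"
    using block_offset_bounds[of x] stretch_radii(1)
    by (simp_all add: v_def strict_mono_less_eq strict_mono_less)
  then have "-1/2 \<le> v" "v < 1/2"
    by (simp_all add: stretch_radii(2,3))
  moreover have eq: "block_stretch r r' x = real n + 1/2 + v"
    using assms by (simp add: block_stretch_def n_def v_def)
  ultimately have "block_index (block_stretch r r' x) = n" "block_offset (block_stretch r r' x) = v"
    by (simp_all add: block_coordinates)
  moreover have "1 \<le> n"
    unfolding n_def using assms by (rule one_le_block_index)
  ultimately show "block_index (block_stretch r r' x) = block_index x"
    "block_offset (block_stretch r r' x) = stretch (r (block_index x)) (r' (block_index x)) (block_offset x)"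
    "1 \<le> block_stretch r r' x"
    using eq \<open>-1/2 \<le> v\<close> by (simp_all add: n_def v_def)
  then show "\<lfloor>block_stretch r r' x\<rfloor> = \<lfloor>x\<rfloor>"
    using assms by (simp add: block_index_def eq_nat_nat_iff)
qed

lemma block_stretch_inverse: "block_stretch r' r (block_stretch r r' x) = x"
proof (cases "x < 1")
  case False
  then have "1 \<le> x"
    by simp
  then show ?thesis
    using block_stretch_coordinates[OF \<open>1 \<le> x\<close>] stretch_radii(6) block_decomposition[of x]
    by (simp add: block_stretch_def)
qed (simp add: block_stretch_def)

lemma strict_mono_block_stretch: "strict_mono (block_stretch r r')"
proof (rule strict_monoI)
  fix x y :: real assume "x < y"
  consider "y < 1" | "x < 1" "1 \<le> y" | "1 \<le> x" "\<lfloor>x\<rfloor> = \<lfloor>y\<rfloor>" | "1 \<le> x" "\<lfloor>x\<rfloor> < \<lfloor>y\<rfloor>"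
    using \<open>x < y\<close> floor_mono[of x y] by linarith
  then show "block_stretch r r' x < block_stretch r r' y"
  proof cases
    case 1
    then have "x < 1"
      using \<open>x < y\<close> by linarith
    then show ?thesis
      using 1 \<open>x < y\<close> by (simp add: block_stretch_def)
  next
    case 2
    then show ?thesis
      using block_stretch_coordinates(4)[of y] by (simp add: block_stretch_def)
  next
    case 3
    have "block_index x = block_index y" "block_offset x < block_offset y"
      using same_block[OF 3(2)] \<open>x < y\<close> by auto
    moreover have "stretch (r (block_index x)) (r' (block_index x)) (block_offset x)
        < stretch (r (block_index x)) (r' (block_index x)) (block_offset y)"
      using stretch_radii(1) \<open>block_offset x < block_offset y\<close> by (simp add: strict_mono_less)
    ultimately show ?thesis
      using 3 \<open>x < y\<close> by (simp add: block_stretch_def)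
  next
    case 4
    then have "block_stretch r r' x < \<lfloor>x\<rfloor> + 1" "\<lfloor>y\<rfloor> \<le> block_stretch r r' y"
      using block_stretch_coordinates(1)[of x] block_stretch_coordinates(1)[of y] \<open>x < y\<close>
      by linarith+
    then show ?thesis
      using 4 by linarith
  qed
qed

end

lemma homeomorphism_block_stretch:
  assumes "admissible_radii r" "admissible_radii r'"
  shows "homeomorphism UNIV UNIV (block_stretch r r') (block_stretch r' r)"
  using strict_mono_block_stretch[OF assms] block_stretch_inverse[OF assms]
    block_stretch_inverse[OF assms(2,1)]
  by (rule homeomorphism_strict_mono_inverse)

fun window :: "nat \<Rightarrow> real \<Rightarrow> real \<Rightarrow> bool" where
  "window 0 a u \<longleftrightarrow> \<bar>u\<bar> < a"
| "window (Suc 0) a u \<longleftrightarrow> -a \<le> u \<and> u < a"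
| "window (Suc (Suc i)) a u \<longleftrightarrow> \<bar>u\<bar> \<le> a"

lemma window_if_abs_less: "\<bar>u\<bar> < a \<Longrightarrow> window i a u"
  by (cases "(i, a, u)" rule: window.cases) auto

lemma abs_le_if_window: "window i a u \<Longrightarrow> \<bar>u\<bar> \<le> a"
  by (cases "(i, a, u)" rule: window.cases) auto

lemma window_strict_mono_iff:
  assumes "strict_mono f" "f a = b" "f (-a) = -b"
  shows "window i b (f u) \<longleftrightarrow> window i a u"
proof -
  have "f u < b \<longleftrightarrow> u < a" "-b < f u \<longleftrightarrow> -a < u" "f u \<le> b \<longleftrightarrow> u \<le> a" "-b \<le> f u \<longleftrightarrow> -a \<le> u"
    using assms by (metis strict_mono_less strict_mono_less_eq)+
  then show ?thesis
    by (cases "(i, a, u)" rule: window.cases) (auto simp: abs_less_iff abs_le_iff)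
qed

definition shape_set :: "nat \<Rightarrow> (nat \<Rightarrow> real) \<Rightarrow> real set" where
  "shape_set i r = {x. 1 \<le> x \<and> window i (r (block_index x)) (block_offset x)}"

lemma shape_set_subset: "shape_set i r \<subseteq> {1..}"
  by (auto simp: shape_set_def)

lemma block_stretch_mem_shape_set:
  assumes "admissible_radii r" "admissible_radii r'"
  shows "block_stretch r r' x \<in> shape_set i r' \<longleftrightarrow> x \<in> shape_set i r"
proof (cases "1 \<le> x")
  case True
  define n where "n = block_index x"
  have "0 < r n" "r n < 1/2" "0 < r' n" "r' n < 1/2"
    using assms by (auto simp: admissible_radii_def dest: spec[of _ n])
  then have "window i (r' n) (stretch (r n) (r' n) (block_offset x)) \<longleftrightarrow> window i (r n) (block_offset x)"
    by (intro window_strict_mono_iff strict_mono_stretch stretch_values)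
  then show ?thesis
    using block_stretch_coordinates[OF assms True] True by (simp add: shape_set_def n_def)
qed (simp add: shape_set_def block_stretch_eq_self)

lemma block_stretch_near:
  assumes "admissible_radii r" "admissible_radii r'"
  shows "\<bar>block_stretch r r' x - x\<bar> < 1"
proof (cases "1 \<le> x")
  case True
  then have "\<lfloor>block_stretch r r' x\<rfloor> = \<lfloor>x\<rfloor>"
    by (rule block_stretch_coordinates[OF assms])
  then show ?thesis
    by linarith
qed (simp add: block_stretch_eq_self)

definition band :: "(nat \<Rightarrow> real) \<Rightarrow> (nat \<Rightarrow> real) \<Rightarrow> real set" where
  "band a b = {x. 1 \<le> x \<and> a (block_index x) < block_offset x \<and> block_offset x < b (block_index x)}"

lemma open_band:
  assumes "\<And>n. -1/2 \<le> a n" "\<And>n. b n \<le> 1/2"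
  shows "open (band a b)"
proof -
  have "band a b = (\<Union>n\<in>{1..}. {real n + 1/2 + a n <..< real n + 1/2 + b n})"
  proof (intro set_eqI iffI)
    fix x assume x: "x \<in> band a b"
    then have "1 \<le> block_index x" "x = real (block_index x) + 1/2 + block_offset x"
      using one_le_block_index block_decomposition by (auto simp: band_def)
    then show "x \<in> (\<Union>n\<in>{1..}. {real n + 1/2 + a n <..< real n + 1/2 + b n})"
      using x by (auto simp: band_def intro!: bexI[of _ "block_index x"])
  next
    fix x assume "x \<in> (\<Union>n\<in>{1..}. {real n + 1/2 + a n <..< real n + 1/2 + b n})"
    then obtain n where n: "1 \<le> n" "a n < x - real n - 1/2" "x - real n - 1/2 < b n"
      by auto
    then have "-1/2 \<le> x - real n - 1/2" "x - real n - 1/2 < 1/2"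
      using assms[of n] by linarith+
    then have "block_index x = n" "block_offset x = x - real n - 1/2"
      using block_coordinates[of "x - real n - 1/2" n] by simp_all
    then show "x \<in> band a b"
      using n \<open>-1/2 \<le> x - real n - 1/2\<close> by (auto simp: band_def)
  qed
  then show ?thesis
    by (simp add: open_UN)
qed

section \<open>Tail topologies\<close>

definition tail_gauge :: "real set \<Rightarrow> real \<Rightarrow> real" where
  "tail_gauge S x = (if x \<in> S then 1 / x else \<bar>x\<bar>)"

definition tail_topology :: "real set \<Rightarrow> real topology" where
  "tail_topology S = gauge_topology (tail_gauge S)"

lemma topspace_tail_topology [simp]: "topspace (tail_topology S) = UNIV"
  by (simp add: tail_topology_def)

lemma tail_subset_tail_gauge_sublevel:
  assumes "S \<subseteq> {1..}" "e > 0"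
  shows "S \<inter> {1/e<..} \<subseteq> {x. tail_gauge S x < e}"
proof
  fix x assume x: "x \<in> S \<inter> {1/e<..}"
  then have "0 < x"
    using assms(1) by auto
  then have "1 / x < e"
    using x assms(2) by (simp add: field_simps)
  then show "x \<in> {x. tail_gauge S x < e}"
    using x by (simp add: tail_gauge_def)
qed

lemma tail_gauge_sublevel_subset:
  assumes "S \<subseteq> {1..}" "S \<inter> {M<..} \<subseteq> U" "ball 0 e \<subseteq> U" "e > 0"
  obtains e' where "e' > 0" "{x. tail_gauge S x < e'} \<subseteq> U"
proof -
  define e' where "e' = min e (1 / max M 1)"
  have "{x. tail_gauge S x < e'} \<subseteq> U"
  proof
    fix x assume x: "x \<in> {x. tail_gauge S x < e'}"
    show "x \<in> U"
    proof (cases "x \<in> S")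
      case True
      then have "1 \<le> x" "1 / x < 1 / max M 1"
        using assms(1) x by (auto simp: tail_gauge_def e'_def)
      then have "M < x"
        by (simp add: frac_less2 divide_less_eq)
      then show ?thesis
        using assms(2) True by auto
    next
      case False
      then show ?thesis
        using x assms(3) by (auto simp: tail_gauge_def e'_def)
    qed
  qed
  moreover have "e' > 0"
    using assms(4) by (simp add: e'_def)
  ultimately show ?thesis
    using that by blast
qed

lemma openin_tail_topology:
  assumes "S \<subseteq> {1..}"
  shows "openin (tail_topology S) U \<longleftrightarrow> open U \<and> (0 \<in> U \<longrightarrow> (\<exists>M. S \<inter> {M<..} \<subseteq> U))"
proof -
  have "(\<exists>e>0. {x. tail_gauge S x < e} \<subseteq> U) \<longleftrightarrow> (\<exists>M. S \<inter> {M<..} \<subseteq> U)"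
    if U: "open U" "0 \<in> U"
  proof
    assume "\<exists>e>0. {x. tail_gauge S x < e} \<subseteq> U"
    then obtain e where "e > 0" "{x. tail_gauge S x < e} \<subseteq> U"
      by blast
    then have "S \<inter> {1/e<..} \<subseteq> U"
      by (rule order_trans[OF tail_subset_tail_gauge_sublevel[OF assms]])
    then show "\<exists>M. S \<inter> {M<..} \<subseteq> U"
      by (rule exI)
  next
    assume "\<exists>M. S \<inter> {M<..} \<subseteq> U"
    then obtain M where "S \<inter> {M<..} \<subseteq> U"
      by blast
    moreover obtain e where "e > 0" "ball 0 e \<subseteq> U"
      using U open_contains_ball by blast
    ultimately obtain e' where "e' > 0" "{x. tail_gauge S x < e'} \<subseteq> U"
      using tail_gauge_sublevel_subset[OF assms] by blast
    then show "\<exists>e>0. {x. tail_gauge S x < e} \<subseteq> U"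
      by blast
  qed
  then show ?thesis
    unfolding tail_topology_def openin_gauge_topology by blast
qed

lemma bounded_below_off_zero_tail_gauge:
  assumes "S \<subseteq> {1..}"
  shows "bounded_below_off_zero (tail_gauge S)"
  unfolding bounded_below_off_zero_def
proof (intro allI impI)
  fix a :: real assume "a \<noteq> 0"
  have "min (\<bar>a\<bar> / 2) (1 / (2 * \<bar>a\<bar>)) \<le> tail_gauge S x" if "x \<in> ball a (\<bar>a\<bar> / 2)" for x
  proof (cases "x \<in> S")
    case True
    then have "1 \<le> x" "x \<le> 2 * \<bar>a\<bar>"
      using assms that by (auto simp: dist_real_def abs_if split: if_splits)
    then have "1 / (2 * \<bar>a\<bar>) \<le> 1 / x"
      by (intro divide_left_mono) auto
    then show ?thesis
      using True by (simp add: tail_gauge_def)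
  next
    case False
    have "\<bar>a\<bar> / 2 \<le> \<bar>x\<bar>"
      using that by (auto simp: dist_real_def abs_if split: if_splits)
    then show ?thesis
      using False by (simp add: tail_gauge_def min.coboundedI1)
  qed
  with \<open>a \<noteq> 0\<close> show "\<exists>d>0. \<exists>c>0. \<forall>x\<in>ball a d. c \<le> tail_gauge S x"
    by (intro exI[of _ "\<bar>a\<bar> / 2"] conjI exI[of _ "min (\<bar>a\<bar> / 2) (1 / (2 * \<bar>a\<bar>))"]) auto
qed

lemma tail_topology_in_L0_family: "S \<subseteq> {1..} \<Longrightarrow> tail_topology S \<in> L0_family"
  unfolding tail_topology_def
  by (intro gauge_topology_in_L0_family bounded_below_off_zero_tail_gauge)

lemma tail_topology_le:
  assumes "S \<subseteq> {1..}" "S' \<subseteq> {1..}" "S \<inter> {M<..} \<subseteq> S'"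
  shows "top_le (tail_topology S') (tail_topology S)"
  unfolding top_le_def openin_tail_topology[OF assms(1)] openin_tail_topology[OF assms(2)]
proof (intro allI impI conjI)
  fix U assume U: "open U \<and> (0 \<in> U \<longrightarrow> (\<exists>M. S' \<inter> {M<..} \<subseteq> U))"
  then show "open U"
    by simp
  assume "0 \<in> U"
  then obtain M' where "S' \<inter> {M'<..} \<subseteq> U"
    using U by blast
  then have "S \<inter> {max M M'<..} \<subseteq> U"
    using assms(3) by (auto simp: subset_iff)
  then show "\<exists>M. S \<inter> {M<..} \<subseteq> U"
    by blast
qed

lemma gauge_compatible_tail_gauge:
  assumes "S \<subseteq> {1..}" "S' \<subseteq> {1..}" "\<And>x. x \<in> S \<Longrightarrow> f x \<in> S'"
    and "\<And>x. \<bar>x\<bar> < 1 \<Longrightarrow> f x = x" "\<And>x. x - 1 < f x"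
  shows "gauge_compatible (tail_gauge S) (tail_gauge S') f"
  unfolding gauge_compatible_def
proof (intro allI impI)
  fix e :: real assume "e > 0"
  have "tail_gauge S' (f x) < e" if x: "tail_gauge S x < min (1/2) (e/2)" for x
  proof (cases "x \<in> S")
    case True
    then have "1 \<le> x" "1 / x < 1/2" "1 / x < e / 2"
      using assms(1) x by (auto simp: tail_gauge_def)
    then have "2 < x" "2 / e < x"
      using \<open>e > 0\<close> by (simp_all add: field_simps)
    then have "x / 2 < f x"
      using assms(5)[of x] by linarith
    then have "1 / f x < 1 / (x / 2)"
      using \<open>2 < x\<close> by (intro divide_strict_left_mono) auto
    also have "1 / (x / 2) < e"
      using \<open>2 / e < x\<close> \<open>2 < x\<close> \<open>e > 0\<close> by (simp add: field_simps)
    finally show ?thesis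
      using assms(3) True by (simp add: tail_gauge_def)
  next
    case False
    then have "\<bar>x\<bar> < 1/2" "\<bar>x\<bar> < e/2"
      using x by (auto simp: tail_gauge_def)
    moreover have "x \<notin> S'"
      using assms(2) \<open>\<bar>x\<bar> < 1/2\<close> by auto
    ultimately show ?thesis
      using assms(4)[of x] by (simp add: tail_gauge_def)
  qed
  then show "\<exists>d>0. \<forall>x. tail_gauge S x < d \<longrightarrow> tail_gauge S' (f x) < e"
    using \<open>e > 0\<close> by (intro exI[of _ "min (1/2) (e/2)"]) auto
qed

definition shape_topology :: "nat \<Rightarrow> (nat \<Rightarrow> real) \<Rightarrow> real topology" where
  "shape_topology i r = tail_topology (shape_set i r)"

lemma homeomorphic_shape_topologies:
  assumes "admissible_radii r" "admissible_radii r'"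
  shows "shape_topology i r homeomorphic_space shape_topology i r'"
proof -
  have "gauge_compatible (tail_gauge (shape_set i r)) (tail_gauge (shape_set i r')) (block_stretch r r')"
    if "admissible_radii r" "admissible_radii r'" for r r'
  proof (rule gauge_compatible_tail_gauge[OF shape_set_subset shape_set_subset])
    show "block_stretch r r' x \<in> shape_set i r'" if "x \<in> shape_set i r" for x
      using block_stretch_mem_shape_set[OF \<open>admissible_radii r\<close> \<open>admissible_radii r'\<close>] that
      by simp
    show "x - 1 < block_stretch r r' x" for x
      using block_stretch_near[OF \<open>admissible_radii r\<close> \<open>admissible_radii r'\<close>, of x]
      unfolding abs_less_iff by linarith
  qed (simp add: block_stretch_eq_self abs_less_iff)
  then show ?thesis
    unfolding shape_topology_def tail_topology_def
    using homeomorphic_gauge_topologies[OF homeomorphism_block_stretch[OF assms]] assms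
    by (simp add: block_stretch_eq_self)
qed

lemma second_countable_tail_topology:
  assumes "S \<subseteq> {1..}" "open S"
  shows "second_countable (tail_topology S)"
proof -
  obtain \<B> :: "real set set" where \<B>: "countable \<B>" "\<And>B. B \<in> \<B> \<Longrightarrow> open B"
    "\<And>U. open U \<Longrightarrow> \<exists>\<U>. \<U> \<subseteq> \<B> \<and> U = \<Union>\<U>"
    using univ_second_countable by blast
  define \<C> where "\<C> = (\<lambda>B. B - {0}) ` \<B> \<union> range (\<lambda>k::nat. ball 0 (1 / Suc k) \<union> (S \<inter> {real k<..}))"
  have "countable \<C>"
    using \<B>(1) by (simp add: \<C>_def)
  moreover have "openin (tail_topology S) C" if "C \<in> \<C>" for C
    using that \<B>(2) assms
    by (auto simp: \<C>_def openin_tail_topology intro!: open_Diff open_Un open_Int exI[of _ "real _"])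
  moreover have "\<exists>C\<in>\<C>. x \<in> C \<and> C \<subseteq> U" if U: "openin (tail_topology S) U" "x \<in> U" for U x
  proof (cases "x = 0")
    case False
    have "open (U - {0})"
      using U(1) assms(1) by (auto simp: openin_tail_topology)
    then obtain \<U> where "\<U> \<subseteq> \<B>" "U - {0} = \<Union>\<U>"
      using \<B>(3) by blast
    then obtain B where "B \<in> \<B>" "x \<in> B" "B \<subseteq> U - {0}"
      using U(2) False by blast
    then show ?thesis
      by (intro bexI[of _ "B - {0}"]) (auto simp: \<C>_def)
  next
    case True
    then obtain M where M: "S \<inter> {M<..} \<subseteq> U" and "open U"
      using U assms(1) by (auto simp: openin_tail_topology)
    obtain e where "e > 0" "ball 0 e \<subseteq> U"
      using \<open>open U\<close> U(2) True open_contains_ball by blast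
    obtain k :: nat where k: "max M (1 / e) < real k"
      using reals_Archimedean2 by blast
    then have "1 / Suc k < e"
      using \<open>e > 0\<close> by (simp add: field_simps)
    then have "ball 0 (1 / Suc k) \<union> (S \<inter> {real k<..}) \<subseteq> U"
      using M k \<open>ball 0 e \<subseteq> U\<close> by auto
    then show ?thesis
      using True by (intro bexI[of _ "ball 0 (1 / Suc k) \<union> (S \<inter> {real k<..})"]) (auto simp: \<C>_def)
  qed
  ultimately show ?thesis
    unfolding second_countable_def by (intro exI[of _ \<C>]) auto
qed

lemma not_regular_tail_topology:
  assumes S: "S \<subseteq> {1..}" and U: "openin (tail_topology S) U" "0 \<in> U"
    and p: "\<And>M. \<exists>p. M < p \<and> p \<notin> U \<and> p \<in> closure S"
  shows "\<not> regular_space (tail_topology S)"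
proof
  assume reg: "regular_space (tail_topology S)"
  have "closedin (tail_topology S) (- U)"
    using U(1) by (simp add: closedin_def Diff_Compl)
  then obtain W V where W: "openin (tail_topology S) W" "0 \<in> W"
    and V: "openin (tail_topology S) V" "- U \<subseteq> V" and "disjnt W V"
    using reg[unfolded regular_space_def, rule_format, of "- U" 0] U(2) by auto
  obtain M where M: "S \<inter> {M<..} \<subseteq> W"
    using W S by (auto simp: openin_tail_topology)
  obtain p where "M < p" "p \<notin> U" "p \<in> closure S"
    using p by blast
  have "open (V \<inter> {M<..})"
    using V(1) S by (auto simp: openin_tail_topology)
  moreover have "p \<in> V \<inter> {M<..} \<inter> closure S"
    using \<open>M < p\<close> \<open>p \<notin> U\<close> \<open>p \<in> closure S\<close> V(2) by auto
  ultimately have "V \<inter> {M<..} \<inter> S \<noteq> {}"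
    using open_Int_closure_eq_empty[of "V \<inter> {M<..}" S] by blast
  then show False
    using M \<open>disjnt W V\<close> by (auto simp: disjnt_def)
qed

lemma first_countable_nat_neighbourhood_base:
  assumes "first_countable X" "a \<in> topspace X"
  obtains W :: "nat \<Rightarrow> 'a set" where "\<forall>k. openin X (W k) \<and> a \<in> W k"
    "\<forall>U. openin X U \<and> a \<in> U \<longrightarrow> (\<exists>k. W k \<subseteq> U)"
proof -
  have "\<exists>\<B>. countable \<B> \<and> (\<forall>V\<in>\<B>. openin X V) \<and>
      (\<forall>U. openin X U \<and> a \<in> U \<longrightarrow> (\<exists>V\<in>\<B>. a \<in> V \<and> V \<subseteq> U))"
    using bspec[OF assms(1)[unfolded first_countable_def] assms(2)] .
  then obtain \<B> where \<B>: "countable \<B>" "\<forall>V\<in>\<B>. openin X V"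
    "\<forall>U. openin X U \<and> a \<in> U \<longrightarrow> (\<exists>V\<in>\<B>. a \<in> V \<and> V \<subseteq> U)"
    by blast
  define \<B>\<^sub>a where "\<B>\<^sub>a = {V \<in> \<B>. a \<in> V}"
  have "\<B>\<^sub>a \<noteq> {}"
    using \<B>(3) openin_topspace[of X] assms(2) by (auto simp: \<B>\<^sub>a_def)
  then have range: "range (from_nat_into \<B>\<^sub>a) = \<B>\<^sub>a"
    using \<B>(1) by (simp add: \<B>\<^sub>a_def)
  show ?thesis
  proof (rule that; intro allI impI conjI)
    show "openin X (from_nat_into \<B>\<^sub>a k)" "a \<in> from_nat_into \<B>\<^sub>a k" for k
      using range \<B>(2) by (auto simp: \<B>\<^sub>a_def)
    show "\<exists>k. from_nat_into \<B>\<^sub>a k \<subseteq> U" if U: "openin X U \<and> a \<in> U" for U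
    proof -
      obtain V where "V \<in> \<B>\<^sub>a" "V \<subseteq> U"
        using \<B>(3) U by (auto simp: \<B>\<^sub>a_def)
      then obtain k where "from_nat_into \<B>\<^sub>a k = V"
        using range by (metis rangeE)
      with \<open>V \<subseteq> U\<close> show ?thesis
        by blast
    qed
  qed
qed

lemma not_first_countable_tail_topology:
  assumes S: "S \<subseteq> {1..}" and q: "\<And>n. q n \<in> S" "\<And>n. real n \<le> q n"
    and U: "\<And>\<eta>. (\<And>n. 0 < \<eta> n) \<Longrightarrow>
      \<exists>U. openin (tail_topology S) U \<and> 0 \<in> U \<and> (\<forall>n. \<exists>y. dist y (q n) < \<eta> n \<and> y \<notin> U)"
  shows "\<not> first_countable (tail_topology S)"
proof
  assume "first_countable (tail_topology S)"
  moreover have "0 \<in> topspace (tail_topology S)"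
    by simp
  ultimately obtain W :: "nat \<Rightarrow> real set" where W: "\<forall>k. openin (tail_topology S) (W k) \<and> 0 \<in> W k"
    "\<forall>U. openin (tail_topology S) U \<and> 0 \<in> U \<longrightarrow> (\<exists>k. W k \<subseteq> U)"
    by (rule first_countable_nat_neighbourhood_base)
  then have "open (W k)" "\<exists>M. S \<inter> {M<..} \<subseteq> W k" for k
    using S by (simp_all add: openin_tail_topology)
  then obtain M where M: "\<And>k. S \<inter> {M k<..} \<subseteq> W k"
    by metis
  have "\<exists>\<delta>>0. q n \<in> W k \<longrightarrow> ball (q n) \<delta> \<subseteq> W k" for k n
  proof (cases "q n \<in> W k")
    case True
    then show ?thesis
      using \<open>open (W k)\<close> open_contains_ball by blast
  qed (auto intro: exI[of _ 1])
  then have "\<forall>k n. \<exists>\<delta>. 0 < \<delta> \<and> (q n \<in> W k \<longrightarrow> ball (q n) \<delta> \<subseteq> W k)"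
    by blast
  then obtain \<delta> where \<delta>: "\<And>k n. 0 < \<delta> k n" "\<And>k n. q n \<in> W k \<Longrightarrow> ball (q n) (\<delta> k n) \<subseteq> W k"
    by metis
  define \<eta> where "\<eta> n = Min ((\<lambda>k. \<delta> k n) ` {..n} \<union> {1})" for n
  have "0 < \<eta> n" for n
    using \<delta>(1) by (simp add: \<eta>_def)
  then obtain U where "openin (tail_topology S) U" "0 \<in> U" and U: "\<And>n. \<exists>y. dist y (q n) < \<eta> n \<and> y \<notin> U"
    using assms(4) by blast
  then obtain k where "W k \<subseteq> U"
    using W(2) by blast
  obtain n :: nat where n: "max (M k) (real k) < real n"
    using reals_Archimedean2 by blast
  then have "q n \<in> W k"
    using M[of k] q[of n] by fastforce
  obtain y where "dist y (q n) < \<eta> n" "y \<notin> U"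
    using U by blast
  moreover have "\<eta> n \<le> \<delta> k n"
    unfolding \<eta>_def using n by (intro Min_le) auto
  ultimately have "y \<in> W k"
    using \<delta>(2)[OF \<open>q n \<in> W k\<close>] by (auto simp: dist_commute)
  then show False
    using \<open>W k \<subseteq> U\<close> \<open>y \<notin> U\<close> by blast
qed

lemma closed_UN_escaping:
  fixes F :: "nat \<Rightarrow> real set"
  assumes "\<And>n. closed (F n)" "\<And>n. F n \<subseteq> {real n - 1..}"
  shows "closed (\<Union>n. F n)"
  unfolding closed_def
proof (subst open_subopen, intro ballI)
  fix x assume "x \<in> - (\<Union>n. F n)"
  obtain N :: nat where "x < real N"
    using reals_Archimedean2 by blast
  define W where "W = {..<real N} - (\<Union>n\<le>N. F n)"
  have "open W"
    unfolding W_def using assms(1) by (intro open_Diff closed_UN) auto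
  moreover have "W \<subseteq> - (\<Union>n. F n)"
  proof
    fix y assume y: "y \<in> W"
    have "y \<notin> F n" for n
    proof (cases "n \<le> N")
      case False
      then have "y < real n - 1"
        using y by (auto simp: W_def)
      then show ?thesis
        using assms(2)[of n] by auto
    qed (use y W_def in auto)
    then show "y \<in> - (\<Union>n. F n)"
      by simp
  qed
  moreover have "x \<in> W"
    using \<open>x \<in> - (\<Union>n. F n)\<close> \<open>x < real N\<close> by (auto simp: W_def)
  ultimately show "\<exists>T. open T \<and> x \<in> T \<and> T \<subseteq> - (\<Union>n. F n)"
    by (intro exI[of _ W]) simp
qed

lemma closed_UN_thickenings:
  assumes "\<And>n. compact (K n)" "\<And>n. K n \<subseteq> {real n<..<real n + 1}" "\<And>n. \<eta> n \<le> 1"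
  shows "closed (\<Union>n\<in>{N..}. \<Union>x\<in>K n. cball x (\<eta> n))"
proof -
  have "closed (\<Union>n. if N \<le> n then \<Union>x\<in>K n. cball x (\<eta> n) else {})"
  proof (rule closed_UN_escaping)
    show "closed (if N \<le> n then \<Union>x\<in>K n. cball x (\<eta> n) else {})" for n
      using compact_minkowski_sum_cball[OF assms(1)] by (simp add: compact_imp_closed)
    show "(if N \<le> n then \<Union>x\<in>K n. cball x (\<eta> n) else {}) \<subseteq> {real n - 1..}" for n
    proof -
      have "(\<Union>x\<in>K n. cball x (\<eta> n)) \<subseteq> {real n - 1..}"
      proof
        fix y assume "y \<in> (\<Union>x\<in>K n. cball x (\<eta> n))"
        then obtain x where "x \<in> K n" "dist x y \<le> \<eta> n"
          by auto
        then have "real n < x" "\<bar>x - y\<bar> \<le> 1"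
          using assms(2)[of n] assms(3)[of n] by (auto simp: dist_real_def)
        then show "y \<in> {real n - 1..}"
          by auto
      qed
      then show ?thesis
        by simp
    qed
  qed
  moreover have "(\<Union>n. if N \<le> n then \<Union>x\<in>K n. cball x (\<eta> n) else {}) = (\<Union>n\<in>{N..}. \<Union>x\<in>K n. cball x (\<eta> n))"
    by (auto split: if_splits)
  ultimately show ?thesis
    by simp
qed

lemma compact_pieces_thickening:
  fixes K :: "nat \<Rightarrow> 'a::metric_space set"
  assumes "\<And>n. compact (K n)" "open W" "\<And>n. N \<le> n \<Longrightarrow> K n \<subseteq> W"
  obtains \<eta> :: "nat \<Rightarrow> real"
  where "\<And>n. 0 < \<eta> n" "\<And>n. \<eta> n \<le> 1" "\<And>n. N \<le> n \<Longrightarrow> (\<Union>x\<in>K n. cball x (\<eta> n)) \<subseteq> W"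
proof -
  have "\<exists>\<eta>>0. \<eta> \<le> 1 \<and> (N \<le> n \<longrightarrow> (\<Union>x\<in>K n. cball x \<eta>) \<subseteq> W)" for n
  proof (cases "N \<le> n")
    case True
    then obtain \<eta> where "\<eta> > 0" "(\<Union>x\<in>K n. cball x \<eta>) \<subseteq> W"
      using compact_subset_open_imp_cball_epsilon_subset[OF assms(1,2,3)] by blast
    moreover have "(\<Union>x\<in>K n. cball x (min \<eta> 1)) \<subseteq> (\<Union>x\<in>K n. cball x \<eta>)"
      by auto
    ultimately have "(\<Union>x\<in>K n. cball x (min \<eta> 1)) \<subseteq> W"
      by (meson order_trans)
    then show ?thesis
      using \<open>\<eta> > 0\<close> by (intro exI[of _ "min \<eta> 1"]) simp
  qed (auto intro: exI[of _ 1])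
  then have "\<forall>n. \<exists>\<eta>. 0 < \<eta> \<and> \<eta> \<le> 1 \<and> (N \<le> n \<longrightarrow> (\<Union>x\<in>K n. cball x \<eta>) \<subseteq> W)"
    by blast
  then obtain \<eta> where "\<forall>n. 0 < \<eta> n \<and> \<eta> n \<le> 1 \<and> (N \<le> n \<longrightarrow> (\<Union>x\<in>K n. cball x (\<eta> n)) \<subseteq> W)"
    by metis
  then show ?thesis
    using that by blast
qed

lemma tail_subset_UN_pieces:
  assumes "\<And>n. K n \<subseteq> {real n<..<real n + 1}" "S = (\<Union>n. K n)"
  shows "S \<inter> {real N + 1<..} \<subseteq> (\<Union>n\<in>{N..}. K n)"
proof
  fix x assume "x \<in> S \<inter> {real N + 1<..}"
  then obtain n where "x \<in> K n" "real N + 1 < x"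
    using assms(2) by auto
  moreover from calculation have "N \<le> n"
    using assms(1)[of n] by fastforce
  ultimately show "x \<in> (\<Union>n\<in>{N..}. K n)"
    by auto
qed

lemma tail_topology_separates_zero:
  assumes K: "\<And>n. compact (K n)" "\<And>n. K n \<subseteq> {real n<..<real n + 1}"
    and S: "S = (\<Union>n. K n)" "S \<subseteq> {1..}"
    and F: "closedin (tail_topology S) F" "0 \<notin> F"
  obtains U V where "openin (tail_topology S) U" "openin (tail_topology S) V" "0 \<in> U" "F \<subseteq> V"
    "disjnt U V"
proof -
  have "openin (tail_topology S) (- F)"
    using F(1) by (simp add: closedin_def Compl_eq_Diff_UNIV[symmetric])
  then have "open (- F)" and "\<exists>M. S \<inter> {M<..} \<subseteq> - F"
    using F(2) S(2) by (simp_all add: openin_tail_topology)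
  then obtain M where M: "S \<inter> {M<..} \<subseteq> - F"
    by blast
  obtain e where "e > 0" "ball 0 e \<subseteq> - F"
    using \<open>open (- F)\<close> F(2) open_contains_ball_eq by blast
  obtain N :: nat where "M < real N"
    using reals_Archimedean2 by blast
  have KF: "K n \<subseteq> - F" if "N \<le> n" for n
  proof
    fix x assume "x \<in> K n"
    then have "x \<in> S \<inter> {M<..}"
      using K(2)[of n] S(1) that \<open>M < real N\<close> by auto
    then show "x \<in> - F"
      using M by blast
  qed
  obtain \<eta> :: "nat \<Rightarrow> real" where \<eta>: "\<And>n. 0 < \<eta> n" "\<And>n. \<eta> n \<le> 1"
    "\<And>n. N \<le> n \<Longrightarrow> (\<Union>x\<in>K n. cball x (\<eta> n)) \<subseteq> - F"
    using compact_pieces_thickening[of K "- F" N, OF K(1) \<open>open (- F)\<close> KF] by blast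
  define U where "U = ball 0 (e/2) \<union> (\<Union>n\<in>{N..}. \<Union>x\<in>K n. ball x (\<eta> n))"
  define D where "D = cball 0 (e/2) \<union> (\<Union>n\<in>{N..}. \<Union>x\<in>K n. cball x (\<eta> n))"
  have "S \<inter> {real N + 1<..} \<subseteq> (\<Union>n\<in>{N..}. K n)"
    by (rule tail_subset_UN_pieces[OF K(2) S(1)])
  also have "\<dots> \<subseteq> U"
    unfolding U_def using \<eta>(1) by force
  moreover have "open U"
    unfolding U_def by (intro open_Un open_ball open_UN) auto
  ultimately have oU: "openin (tail_topology S) U"
    using S(2) by (auto simp: openin_tail_topology intro!: exI[of _ "real N + 1"])
  have oD: "openin (tail_topology S) (- D)"
    unfolding tail_topology_def D_def using \<open>e > 0\<close> closed_UN_thickenings[OF K \<eta>(2)]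
    by (intro openin_gauge_topology_if_zero_notin open_Compl closed_Un) auto
  have FD: "F \<subseteq> - D"
  proof -
    have "cball 0 (e/2) \<subseteq> ball 0 e"
      using \<open>e > 0\<close> by auto
    moreover have "(\<Union>n\<in>{N..}. \<Union>x\<in>K n. cball x (\<eta> n)) \<subseteq> - F"
      using \<eta>(3) by (intro UN_least) auto
    ultimately show ?thesis
      using \<open>ball 0 e \<subseteq> - F\<close> unfolding D_def by auto
  qed
  have "U \<subseteq> D"
    unfolding U_def D_def by (intro Un_mono UN_mono ball_subset_cball order_refl)
  then have "disjnt U (- D)"
    by (auto simp: disjnt_def)
  moreover have "0 \<in> U"
    using \<open>e > 0\<close> by (simp add: U_def)
  ultimately show ?thesis
    using that[OF oU oD _ FD] by simp
qed

lemma regular_tail_topology: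
  assumes "\<And>n. compact (K n)" "\<And>n. K n \<subseteq> {real n<..<real n + 1}" "S = (\<Union>n. K n)" "S \<subseteq> {1..}"
  shows "regular_space (tail_topology S)"
  unfolding regular_space_def
proof (intro allI impI)
  fix F a assume "closedin (tail_topology S) F \<and> a \<in> topspace (tail_topology S) - F"
  then have F: "closedin (tail_topology S) F" "a \<notin> F"
    by auto
  show "\<exists>U V. openin (tail_topology S) U \<and> openin (tail_topology S) V \<and> a \<in> U \<and> F \<subseteq> V \<and> disjnt U V"
  proof (cases "a = 0")
    case True
    obtain U V where "openin (tail_topology S) U" "openin (tail_topology S) V" "0 \<in> U" "F \<subseteq> V"
      "disjnt U V"
      by (rule tail_topology_separates_zero[OF assms F(1)]) (use F(2) True in simp)
    then show ?thesis
      using True by (intro exI[of _ U] exI[of _ V]) simp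
  next
    case False
    obtain U V where "openin (tail_topology S) U" "openin (tail_topology S) V" "a \<in> U" "F \<subseteq> V"
      "disjnt U V"
      using gauge_topology_separates_nonzero[OF bounded_below_off_zero_tail_gauge[OF assms(4)] _ False F(2)]
        F(1) unfolding tail_topology_def by blast
    then show ?thesis
      by (intro exI[of _ U] exI[of _ V]) simp
  qed
qed

lemma shape_topology_in_L0_family: "shape_topology i r \<in> L0_family"
  unfolding shape_topology_def by (intro tail_topology_in_L0_family shape_set_subset)

lemma openin_shape_topology:
  "openin (shape_topology i r) U \<longleftrightarrow> open U \<and> (0 \<in> U \<longrightarrow> (\<exists>M. shape_set i r \<inter> {M<..} \<subseteq> U))"
  unfolding shape_topology_def by (rule openin_tail_topology[OF shape_set_subset])

lemma shape_set_mem_block_point: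
  assumes "-1/2 \<le> v" "v < 1/2" "1 \<le> n"
  shows "real n + 1/2 + v \<in> shape_set i r \<longleftrightarrow> window i (r n) v"
  using assms by (simp add: shape_set_def block_coordinates)

lemma second_countable_shape_topology:
  assumes "admissible_radii r"
  shows "second_countable (shape_topology 0 r)"
proof -
  have "shape_set 0 r = band (\<lambda>n. - r n) r"
    by (auto simp: shape_set_def band_def abs_less_iff)
  moreover have "open (band (\<lambda>n. - r n) r)"
    using admissible_radiiD(3)[OF assms] by (intro open_band) (auto simp: less_imp_le)
  ultimately show ?thesis
    unfolding shape_topology_def by (intro second_countable_tail_topology shape_set_subset) simp
qed

lemma openin_shape_topology_ball_band:
  assumes "\<And>n. -1/2 \<le> a n" "\<And>n. b n \<le> 1/2" "\<And>n. M < n \<Longrightarrow> a n < - r n \<and> r n < b n"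
  shows "openin (shape_topology i r) (ball 0 1 \<union> band a b)"
  unfolding openin_shape_topology
proof (intro conjI impI exI)
  show "open (ball 0 1 \<union> band a b)"
    using assms(1,2) by (intro open_Un open_ball open_band)
  show "shape_set i r \<inter> {real M + 1<..} \<subseteq> ball 0 1 \<union> band a b"
  proof
    fix x assume x: "x \<in> shape_set i r \<inter> {real M + 1<..}"
    then have "1 \<le> x" "\<bar>block_offset x\<bar> \<le> r (block_index x)"
      by (auto simp: shape_set_def abs_le_if_window)
    moreover have "a (block_index x) < - r (block_index x) \<and> r (block_index x) < b (block_index x)"
      using x by (intro assms(3) block_index_gt) simp
    ultimately show "x \<in> ball 0 1 \<union> band a b"
      by (auto simp: band_def abs_le_iff)
  qed
qed

lemma block_point_in_closure_shape_set:
  assumes "admissible_radii r" "1 \<le> n"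
  shows "real n + 1/2 + r n \<in> closure (shape_set i r)"
  unfolding closure_approachable
proof (intro allI impI)
  fix \<epsilon> :: real assume "\<epsilon> > 0"
  define v where "v = r n - min \<epsilon> (r n) / 2"
  have "\<bar>v\<bar> < r n" "-1/2 \<le> v" "v < 1/2"
    using \<open>\<epsilon> > 0\<close> admissible_radiiD[OF assms(1), of n] by (auto simp: v_def)
  then have "real n + 1/2 + v \<in> shape_set i r"
    using assms(2) by (simp add: shape_set_mem_block_point window_if_abs_less)
  moreover have "dist (real n + 1/2 + v) (real n + 1/2 + r n) < \<epsilon>"
    using \<open>\<epsilon> > 0\<close> admissible_radiiD[OF assms(1), of n] by (auto simp: v_def dist_real_def)
  ultimately show "\<exists>y\<in>shape_set i r. dist y (real n + 1/2 + r n) < \<epsilon>"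
    by blast
qed

lemma not_regular_shape_topology:
  assumes "admissible_radii r" "i \<le> 1"
  shows "\<not> regular_space (shape_topology i r)"
  unfolding shape_topology_def
proof (rule not_regular_tail_topology[OF shape_set_subset])
  define U where "U = ball 0 1 \<union> band (\<lambda>_. -1/2) r"
  note r = admissible_radiiD[OF assms(1)]
  have "open U"
    using r(3) unfolding U_def by (intro open_Un open_ball open_band) (auto simp: less_imp_le)
  moreover have "shape_set i r \<inter> {0<..} \<subseteq> U"
  proof
    fix x assume "x \<in> shape_set i r \<inter> {0<..}"
    then have "1 \<le> x" "-1/2 < block_offset x" "block_offset x < r (block_index x)"
      using assms(2) r[of "block_index x"] by (auto simp: shape_set_def le_Suc_eq)
    then show "x \<in> U"
      by (simp add: U_def band_def)
  qed
  ultimately show "openin (tail_topology (shape_set i r)) U"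
    using openin_tail_topology[OF shape_set_subset] by blast
  show "0 \<in> U"
    by (simp add: U_def)
  fix M
  obtain n :: nat where n: "max M 1 < real n"
    using reals_Archimedean2 by blast
  then have "real n + 1/2 + r n \<notin> U" "M < real n + 1/2 + r n"
    using block_coordinates[of "r n" n] r[of n] by (auto simp: U_def band_def)
  moreover have "real n + 1/2 + r n \<in> closure (shape_set i r)"
    using n by (intro block_point_in_closure_shape_set assms(1)) simp
  ultimately show "\<exists>p. M < p \<and> p \<notin> U \<and> p \<in> closure (shape_set i r)"
    by blast
qed

lemma not_first_countable_shape_topology:
  assumes "admissible_radii r" "1 \<le> i"
  shows "\<not> first_countable (shape_topology i r)"
  unfolding shape_topology_def
proof (rule not_first_countable_tail_topology[OF shape_set_subset])
  note r = admissible_radiiD[OF assms(1)]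
  define q where "q n = real (Suc n) + 1/2 - r (Suc n)" for n
  have q_coords: "block_index (q n - t) = Suc n" "block_offset (q n - t) = - r (Suc n) - t"
    if "0 \<le> t" "t \<le> 1/20" for n t
    using block_coordinates[of "- r (Suc n) - t" "Suc n"] r[of "Suc n"] that
    by (simp_all add: q_def algebra_simps)
  show "q n \<in> shape_set i r" for n
    using q_coords[of 0 n] r[of "Suc n"] assms(2)
    by (cases "(i, r (Suc n), - r (Suc n))" rule: window.cases) (auto simp: shape_set_def q_def)
  show "real n \<le> q n" for n
    using r[of "Suc n"] by (simp add: q_def)
  fix \<eta> :: "nat \<Rightarrow> real" assume "\<And>n. 0 < \<eta> n"
  define \<theta> where "\<theta> m = min (1/20) (\<eta> (m - 1)) / 2" for m
  have \<theta>: "0 < \<theta> m" "\<theta> m \<le> 1/40" "\<theta> (Suc n) < \<eta> n" for m n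
    using \<open>\<And>n. 0 < \<eta> n\<close>[of "m - 1"] \<open>\<And>n. 0 < \<eta> n\<close>[of n] by (auto simp: \<theta>_def)
  define U where "U = ball 0 1 \<union> band (\<lambda>m. - r m - \<theta> m) (\<lambda>m. r m + 1/20)"
  have "-1/2 \<le> - r m - \<theta> m" "r m + 1/20 \<le> 1/2" "- r m - \<theta> m < - r m" for m
    using r(2)[of m] \<theta>(1,2)[of m] by linarith+
  then have "openin (tail_topology (shape_set i r)) U"
    unfolding U_def using openin_shape_topology_ball_band[of _ _ 0 r i]
    by (simp add: shape_topology_def)
  moreover have "dist (q n - \<theta> (Suc n)) (q n) < \<eta> n \<and> q n - \<theta> (Suc n) \<notin> U" for n
  proof
    show "dist (q n - \<theta> (Suc n)) (q n) < \<eta> n"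
      using \<theta>(1)[of "Suc n"] \<theta>(3)[of n] by (simp add: dist_real_def)
    have "1 \<le> q n - \<theta> (Suc n)"
      using r[of "Suc n"] \<theta>(2)[of "Suc n"] by (simp add: q_def)
    then show "q n - \<theta> (Suc n) \<notin> U"
      using q_coords[of "\<theta> (Suc n)" n] \<theta>(1,2)[of "Suc n"] by (auto simp: U_def band_def)
  qed
  moreover have "0 \<in> U"
    by (simp add: U_def)
  ultimately show "\<exists>U. openin (tail_topology (shape_set i r)) U \<and> 0 \<in> U \<and>
      (\<forall>n. \<exists>y. dist y (q n) < \<eta> n \<and> y \<notin> U)"
    by blast
qed

lemma shape_set_closed_windows:
  assumes "admissible_radii r" "2 \<le> i"
  shows "shape_set i r = (\<Union>n. if n = 0 then {} else {real n + 1/2 - r n .. real n + 1/2 + r n})"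
proof -
  have w: "window i a u \<longleftrightarrow> \<bar>u\<bar> \<le> a" for a u
    using assms(2) by (cases "(i, a, u)" rule: window.cases) auto
  note r = admissible_radiiD[OF assms(1)]
  show ?thesis
  proof (intro set_eqI iffI)
    fix x assume "x \<in> shape_set i r"
    then have "1 \<le> x" "\<bar>block_offset x\<bar> \<le> r (block_index x)"
      by (auto simp: shape_set_def w)
    then show "x \<in> (\<Union>n. if n = 0 then {} else {real n + 1/2 - r n .. real n + 1/2 + r n})"
      using one_le_block_index[of x] block_decomposition[of x]
      by (intro UN_I[of "block_index x"]) (auto simp: abs_le_iff)
  next
    fix x assume "x \<in> (\<Union>n. if n = 0 then {} else {real n + 1/2 - r n .. real n + 1/2 + r n})"
    then obtain n where "n \<noteq> 0" "x \<in> {real n + 1/2 - r n .. real n + 1/2 + r n}"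
      by (auto split: if_splits)
    then have "1 \<le> n" "\<bar>x - real n - 1/2\<bar> \<le> r n"
      by (auto simp: abs_le_iff)
    moreover have "-1/2 \<le> x - real n - 1/2" "x - real n - 1/2 < 1/2"
      using calculation r[of n] by (auto simp: abs_le_iff)
    ultimately show "x \<in> shape_set i r"
      using shape_set_mem_block_point[of "x - real n - 1/2" n i r] by (simp add: w)
  qed
qed

lemma regular_shape_topology:
  assumes "admissible_radii r" "2 \<le> i"
  shows "regular_space (shape_topology i r)"
  unfolding shape_topology_def
proof (rule regular_tail_topology[OF _ _ shape_set_closed_windows[OF assms] shape_set_subset])
  note r = admissible_radiiD[OF assms(1)]
  show "compact (if n = 0 then {} else {real n + 1/2 - r n .. real n + 1/2 + r n})" for n
    by simp
  show "(if n = 0 then {} else {real n + 1/2 - r n .. real n + 1/2 + r n}) \<subseteq> {real n<..<real n + 1}" for n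
    using r(1,3)[of n] by auto
qed

lemma hereditarily_normal_shape_topology:
  assumes "admissible_radii r" "2 \<le> i"
  shows "hereditarily normal_space (shape_topology i r)"
  using regular_shape_topology[OF assms]
  by (rule hereditarily_normal_if_regular_coarser)
    (simp add: shape_topology_def tail_topology_def gauge_topology_le_euclidean)

lemma shape_set_tail_subset:
  assumes "\<And>n. M < n \<Longrightarrow> r n < r' n"
  shows "shape_set i r \<inter> {real M + 1<..} \<subseteq> shape_set j r'"
proof
  fix x assume "x \<in> shape_set i r \<inter> {real M + 1<..}"
  then have "1 \<le> x" "\<bar>block_offset x\<bar> < r' (block_index x)"
    using assms[OF block_index_gt] abs_le_if_window by (fastforce simp: shape_set_def)+
  then show "x \<in> shape_set j r'"
    by (simp add: shape_set_def window_if_abs_less)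
qed

lemma shape_topology_le:
  assumes "\<And>n. M < n \<Longrightarrow> r n < r' n"
  shows "top_le (shape_topology j r') (shape_topology i r)"
  unfolding shape_topology_def
  by (rule tail_topology_le[OF shape_set_subset shape_set_subset shape_set_tail_subset[OF assms]])

lemma not_shape_topology_le:
  assumes "admissible_radii r" "admissible_radii r'" "\<And>n. M < n \<Longrightarrow> r n < r' n"
  shows "\<not> top_le (shape_topology i r) (shape_topology j r')"
proof
  assume le: "top_le (shape_topology i r) (shape_topology j r')"
  define m where "m n = (r n + r' n) / 2" for n
  define U where "U = ball 0 1 \<union> band (\<lambda>n. - m n) m"
  have "-1/2 \<le> - m n" "m n \<le> 1/2" "M < n \<Longrightarrow> - m n < - r n \<and> r n < m n" for n
    using admissible_radiiD(2)[OF assms(1), of n] admissible_radiiD(2)[OF assms(2), of n] assms(3)[of n]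
    by (auto simp: m_def field_simps)
  then have "openin (shape_topology i r) U"
    unfolding U_def by (intro openin_shape_topology_ball_band)
  then have "openin (shape_topology j r') U"
    using le by (simp add: top_le_def)
  then obtain M' where M': "shape_set j r' \<inter> {M'<..} \<subseteq> U"
    by (auto simp: openin_shape_topology U_def)
  obtain n :: nat where n: "max (max M' 1) (real M) < real n"
    using reals_Archimedean2 by blast
  define v where "v = (m n + r' n) / 2"
  have "M < n"
    using n by simp
  then have v: "m n < v" "\<bar>v\<bar> < r' n" "-1/2 \<le> v" "v < 1/2"
    using assms(3)[of n] admissible_radiiD[OF assms(1), of n] admissible_radiiD[OF assms(2), of n]
    by (auto simp: v_def m_def field_simps)
  then have "real n + 1/2 + v \<in> shape_set j r' \<inter> {M'<..}"
    using n by (simp add: shape_set_mem_block_point window_if_abs_less)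
  moreover have "real n + 1/2 + v \<notin> U"
    using v n block_coordinates[OF v(3,4), of n] by (auto simp: U_def band_def)
  ultimately show False
    using M' by blast
qed

section \<open>Band topologies\<close>

lemma infdist_lessE:
  assumes "infdist x A < e" "A \<noteq> {}"
  obtains a where "a \<in> A" "dist x a < e"
  using assms by (auto simp: infdist_notempty cINF_less_iff)

lemma inverse_one_plus_abs_le: "1 / (1 + \<bar>x\<bar>) \<le> 1 / (1 + \<bar>y\<bar>) + \<bar>x - y\<bar>"
  for x y :: real
proof -
  have "1 / (1 + \<bar>x\<bar>) - 1 / (1 + \<bar>y\<bar>) = (\<bar>y\<bar> - \<bar>x\<bar>) / ((1 + \<bar>x\<bar>) * (1 + \<bar>y\<bar>))"
    by (simp add: field_simps)
  also have "\<dots> \<le> \<bar>\<bar>y\<bar> - \<bar>x\<bar>\<bar> / 1"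
    by (intro frac_le) (auto simp: mult_ge1_I)
  also have "\<dots> \<le> \<bar>x - y\<bar>"
    by simp
  finally show ?thesis
    by simp
qed

definition band_gauge :: "real \<Rightarrow> real \<Rightarrow> real" where
  "band_gauge s x = min \<bar>x\<bar> (infdist x (shape_set 2 (\<lambda>_. s)) + 1 / (1 + \<bar>x\<bar>))"

definition band_topology :: "real \<Rightarrow> real topology" where
  "band_topology s = gauge_topology (band_gauge s)"

lemma band_gauge_le: "band_gauge s x \<le> band_gauge s y + 2 * \<bar>x - y\<bar>"
proof -
  let ?C = "shape_set 2 (\<lambda>_. s)"
  have "infdist x ?C + 1 / (1 + \<bar>x\<bar>) \<le> (infdist y ?C + 1 / (1 + \<bar>y\<bar>)) + 2 * \<bar>x - y\<bar>"
    using infdist_triangle[of x ?C y] inverse_one_plus_abs_le[of x y] by (simp add: dist_real_def)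
  moreover have "\<bar>x\<bar> \<le> \<bar>y\<bar> + 2 * \<bar>x - y\<bar>"
    by (smt (verit))
  ultimately show ?thesis
    unfolding band_gauge_def by linarith
qed

lemma lipschitz_gauge_band_gauge: "lipschitz_gauge 2 (band_gauge s)"
proof
  have "0 \<le> infdist 0 (shape_set 2 (\<lambda>_. s)) + 1"
    using infdist_nonneg by (rule add_nonneg_nonneg) simp
  then show "band_gauge s 0 = 0"
    by (simp add: band_gauge_def)
  show "0 < band_gauge s x" if "x \<noteq> 0" for x
    using that infdist_nonneg[of x] by (simp add: band_gauge_def add_nonneg_pos)
  show "2-lipschitz_on UNIV (band_gauge s)"
  proof (rule lipschitz_onI)
    fix x y :: real
    show "dist (band_gauge s x) (band_gauge s y) \<le> 2 * dist x y"
      using band_gauge_le[of s x y] band_gauge_le[of s y x]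
      by (simp add: dist_real_def abs_le_iff abs_minus_commute)
  qed simp
qed simp

lemma completely_metrizable_band_topology: "completely_metrizable_space (band_topology s)"
  unfolding band_topology_def
  by (rule lipschitz_gauge.completely_metrizable_gauge_topology[OF lipschitz_gauge_band_gauge])

lemma band_topology_in_L0_family: "band_topology s \<in> L0_family"
  unfolding band_topology_def
  by (rule gauge_topology_in_L0_family[OF lipschitz_gauge.bounded_below_off_zero_gauge[OF lipschitz_gauge_band_gauge]])

lemma floor_eq_if_near:
  assumes "\<bar>x - y\<bar> < 1/2 - \<bar>block_offset y\<bar>"
  shows "\<lfloor>x\<rfloor> = \<lfloor>y\<rfloor>"
proof -
  have "x = real_of_int \<lfloor>y\<rfloor> + 1/2 + (block_offset y + (x - y))"
    by (simp add: block_offset_def)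
  moreover have "-1/2 < block_offset y + (x - y)" "block_offset y + (x - y) < 1/2"
    using assms by linarith+
  ultimately show ?thesis
    by (intro floor_unique) linarith+
qed

lemma mem_band_shape_set:
  "y \<in> shape_set 2 (\<lambda>_. s) \<longleftrightarrow> 1 \<le> y \<and> \<bar>block_offset y\<bar> \<le> s"
  by (simp add: shape_set_def numeral_2_eq_2)

lemma band_gauge_less:
  assumes "0 \<le> s" "s \<le> 1/50" "band_gauge s x < d" "d \<le> 1/40"
  shows "\<bar>x\<bar> < d \<or> (1 \<le> x \<and> 1 / (1 + x) < d \<and> (\<exists>y\<in>shape_set 2 (\<lambda>_. s). \<bar>x - y\<bar> < d \<and> \<lfloor>x\<rfloor> = \<lfloor>y\<rfloor>))"
proof (cases "\<bar>x\<bar> < d")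
  case False
  let ?C = "shape_set 2 (\<lambda>_. s)"
  have "infdist x ?C + 1 / (1 + \<bar>x\<bar>) < d"
    using assms(3) False by (simp add: band_gauge_def)
  moreover have "0 < 1 / (1 + \<bar>x\<bar>)" "0 \<le> infdist x ?C"
    by (simp_all add: add_pos_nonneg infdist_nonneg)
  ultimately have "infdist x ?C < d" "1 / (1 + \<bar>x\<bar>) < d"
    by linarith+
  moreover have "?C \<noteq> {}"
    using assms(1) block_coordinates[of 0 1] mem_band_shape_set[of "real 1 + 1/2 + 0" s] by auto
  ultimately obtain y where "y \<in> ?C" "dist x y < d"
    by (auto elim: infdist_lessE)
  then have "y \<in> ?C" "\<bar>x - y\<bar> < d"
    by (simp_all add: dist_real_def)
  moreover have "1 \<le> y" "\<bar>block_offset y\<bar> \<le> s"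
    using \<open>y \<in> ?C\<close> by (simp_all add: mem_band_shape_set)
  moreover from calculation have "\<lfloor>x\<rfloor> = \<lfloor>y\<rfloor>"
    using assms(2,4) by (intro floor_eq_if_near) linarith
  moreover from calculation have "1 \<le> x"
    by (metis floor_le_one le_floor_iff of_int_1)
  ultimately show ?thesis
    using \<open>1 / (1 + \<bar>x\<bar>) < d\<close> by auto
qed simp

lemma block_offset_near_band:
  assumes "y \<in> shape_set 2 (\<lambda>_. s)" "\<lfloor>x\<rfloor> = \<lfloor>y\<rfloor>" "\<bar>x - y\<bar> < d"
  shows "\<bar>block_offset x\<bar> < s + d"
  using assms same_block(2)[OF assms(2)] by (simp add: mem_band_shape_set) (smt (verit))

lemma band_shape_set_nonempty: "0 \<le> s \<Longrightarrow> shape_set 2 (\<lambda>_. s) \<noteq> {}"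
  using block_coordinates[of 0 1] mem_band_shape_set[of "real 1 + 1/2 + 0" s] by auto

lemma band_topology_le:
  assumes "0 \<le> s" "s \<le> s'"
  shows "top_le (band_topology s') (band_topology s)"
  unfolding band_topology_def
proof (rule gauge_topology_le)
  have "shape_set 2 (\<lambda>_. s) \<subseteq> shape_set 2 (\<lambda>_. s')"
    using assms(2) by (auto simp: mem_band_shape_set)
  then have "infdist x (shape_set 2 (\<lambda>_. s')) \<le> infdist x (shape_set 2 (\<lambda>_. s))" for x
    using band_shape_set_nonempty[OF assms(1)] by (rule infdist_mono)
  then have mono: "band_gauge s' x \<le> band_gauge s x" for x
    unfolding band_gauge_def by (meson add_right_mono min.mono order_refl)
  show "gauge_compatible (band_gauge s) (band_gauge s') id"
    unfolding gauge_compatible_def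
  proof (intro allI impI)
    fix e :: real assume "e > 0"
    then show "\<exists>d>0. \<forall>x. band_gauge s x < d \<longrightarrow> band_gauge s' (id x) < e"
      using mono by (intro exI[of _ e]) (auto intro: le_less_trans)
  qed
qed

lemma band_gauge_sublevel_subset_band:
  assumes "0 \<le> s" "s \<le> 1/50" "0 < e" "e \<le> 1/40" "s + e \<le> m" "m \<le> 1/2"
  shows "{x. band_gauge s x < e} \<subseteq> ball 0 1 \<union> band (\<lambda>_. - m) (\<lambda>_. m)"
proof
  fix x assume "x \<in> {x. band_gauge s x < e}"
  then have "\<bar>x\<bar> < e \<or> (1 \<le> x \<and> (\<exists>y\<in>shape_set 2 (\<lambda>_. s). \<bar>x - y\<bar> < e \<and> \<lfloor>x\<rfloor> = \<lfloor>y\<rfloor>))"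
    using band_gauge_less[of s x e] assms by auto
  then show "x \<in> ball 0 1 \<union> band (\<lambda>_. - m) (\<lambda>_. m)"
    using block_offset_near_band[of _ s x e] assms by (fastforce simp: band_def abs_less_iff)
qed

lemma band_gauge_block_point_less:
  assumes "0 \<le> s" "s < 1/2" "1 \<le> n"
  shows "band_gauge s (real n + 1/2 + s) < 1 / real n"
proof -
  have "real n + 1/2 + s \<in> shape_set 2 (\<lambda>_. s)"
    using assms block_coordinates[of s n] by (simp add: mem_band_shape_set)
  then have "band_gauge s (real n + 1/2 + s) \<le> 1 / (1 + \<bar>real n + 1/2 + s\<bar>)"
    by (simp add: band_gauge_def)
  also have "\<dots> < 1 / real n"
    using assms by (intro divide_strict_left_mono) auto
  finally show ?thesis .
qed

lemma not_band_topology_le: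
  assumes "0 \<le> s" "s < s'" "s' \<le> 1/50"
  shows "\<not> top_le (band_topology s) (band_topology s')"
  unfolding band_topology_def
proof (rule not_gauge_topology_le)
  define m where "m = (s + s') / 2"
  define U where "U = ball 0 1 \<union> band (\<lambda>_. - m) (\<lambda>_. m)"
  define e where "e = min (1/40) ((s' - s) / 4)"
  have e: "0 < e" "e \<le> 1/40" "s + e < m" "m < s'"
    using assms by (auto simp: e_def m_def min_def field_simps)
  have "open U"
    unfolding U_def using assms e by (intro open_Un open_ball open_band) (auto simp: m_def)
  moreover have "{x. band_gauge s x < e} \<subseteq> U"
    unfolding U_def using assms e by (intro band_gauge_sublevel_subset_band) auto
  ultimately show "openin (gauge_topology (band_gauge s)) U"
    using e(1) by (auto simp: openin_gauge_topology)
  show "0 \<in> U"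
    by (simp add: U_def)
  fix e' :: real assume "e' > 0"
  obtain n :: nat where n: "max 1 (1 / e') < real n"
    using reals_Archimedean2 by blast
  then have "1 < real n * e'"
    using \<open>e' > 0\<close> by (simp add: pos_divide_less_eq)
  then have "1 / real n < e'"
    using n by (simp add: divide_less_eq mult.commute)
  then have "band_gauge s' (real n + 1/2 + s') < e'"
    using band_gauge_block_point_less[of s' n] assms n by simp
  moreover have "real n + 1/2 + s' \<notin> U"
  proof -
    have "1 \<le> real n + 1/2 + s'"
      using n assms(1,2) by simp
    moreover have "real n + 1/2 + s' \<notin> band (\<lambda>_. - m) (\<lambda>_. m)"
      using block_coordinates[of s' n] assms e by (simp add: band_def)
    ultimately show ?thesis
      by (simp add: U_def)
  qed
  ultimately show "\<exists>x. band_gauge s' x < e' \<and> x \<notin> U"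
    by blast
qed

lemma admissible_radii_const: "0 < s \<Longrightarrow> s \<le> 2/5 \<Longrightarrow> admissible_radii (\<lambda>_. s)"
  by (simp add: admissible_radii_def)

lemma block_stretch_dist_le:
  assumes s: "1/100 \<le> s" "s \<le> 1/50" and s': "1/100 \<le> s'" "s' \<le> 1/50"
    and "1 \<le> x" "1 \<le> y" "\<lfloor>x\<rfloor> = \<lfloor>y\<rfloor>"
  shows "\<bar>block_stretch (\<lambda>_. s) (\<lambda>_. s') x - block_stretch (\<lambda>_. s) (\<lambda>_. s') y\<bar> \<le> 2 * \<bar>x - y\<bar>"
proof -
  have adm: "admissible_radii (\<lambda>_. s)" "admissible_radii (\<lambda>_. s')"
    using s s' by (simp_all add: admissible_radii_const)
  have "max (stretch_slope s s') (s' / s) \<le> 2"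
    using s s' by (simp add: stretch_slope_def field_simps)
  then have "2-lipschitz_on {-1/2..1/2} (stretch s s')"
    using lipschitz_stretch[of s s'] s s' by (auto intro: lipschitz_on_le)
  moreover have "block_offset x \<in> {-1/2..1/2}" "block_offset y \<in> {-1/2..1/2}"
    using block_offset_bounds[of x] block_offset_bounds[of y] by auto
  ultimately have "\<bar>stretch s s' (block_offset x) - stretch s s' (block_offset y)\<bar>
      \<le> 2 * \<bar>block_offset x - block_offset y\<bar>"
    using lipschitz_onD by (fastforce simp: dist_real_def)
  moreover have "block_stretch (\<lambda>_. s) (\<lambda>_. s') x - block_stretch (\<lambda>_. s) (\<lambda>_. s') y
      = stretch s s' (block_offset x) - stretch s s' (block_offset y)"
    using assms(5-7) same_block(1)[OF assms(7)] by (simp add: block_stretch_def)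
  ultimately show ?thesis
    using same_block(2)[OF assms(7)] by simp
qed

lemma band_gauge_block_stretch_less:
  assumes s: "1/100 \<le> s" "s \<le> 1/50" and s': "1/100 \<le> s'" "s' \<le> 1/50"
    and x: "1 \<le> x" "1 / (1 + x) < d"
    and y: "y \<in> shape_set 2 (\<lambda>_. s)" "\<bar>x - y\<bar> < d" "\<lfloor>x\<rfloor> = \<lfloor>y\<rfloor>"
  shows "band_gauge s' (block_stretch (\<lambda>_. s) (\<lambda>_. s') x) < 4 * d"
proof -
  let ?\<psi> = "block_stretch (\<lambda>_. s) (\<lambda>_. s')"
  have adm: "admissible_radii (\<lambda>_. s)" "admissible_radii (\<lambda>_. s')"
    using s s' by (simp_all add: admissible_radii_const)
  have "?\<psi> y \<in> shape_set 2 (\<lambda>_. s')"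
    using y(1) block_stretch_mem_shape_set[OF adm] by blast
  then have "infdist (?\<psi> x) (shape_set 2 (\<lambda>_. s')) \<le> \<bar>?\<psi> x - ?\<psi> y\<bar>"
    using infdist_le[of "?\<psi> y" _ "?\<psi> x"] by (simp add: dist_real_def)
  also have "\<dots> < 2 * d"
    using block_stretch_dist_le[OF s s' x(1) _ y(3)] y(1,2) by (force simp: mem_band_shape_set)
  finally have "infdist (?\<psi> x) (shape_set 2 (\<lambda>_. s')) < 2 * d" .
  moreover have "1 / (1 + \<bar>?\<psi> x\<bar>) < 2 * d"
  proof -
    have "x - 1 < ?\<psi> x"
      using block_stretch_near[OF adm, of x] by (simp add: abs_less_iff)
    then have "(1 + x) / 2 \<le> 1 + \<bar>?\<psi> x\<bar>"
      using x(1) by (simp add: field_simps)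
    then have "1 / (1 + \<bar>?\<psi> x\<bar>) \<le> 2 / (1 + x)"
      using x(1) by (simp add: field_simps)
    also have "\<dots> < 2 * d"
      using x(2) by simp
    finally show ?thesis .
  qed
  ultimately show ?thesis
    by (simp add: band_gauge_def)
qed

lemma gauge_compatible_band_gauge:
  assumes s: "1/100 \<le> s" "s \<le> 1/50" and s': "1/100 \<le> s'" "s' \<le> 1/50"
  shows "gauge_compatible (band_gauge s) (band_gauge s') (block_stretch (\<lambda>_. s) (\<lambda>_. s'))"
  unfolding gauge_compatible_def
proof (intro allI impI)
  fix e :: real assume "e > 0"
  define d where "d = min (1/40) (e/8)"
  have d: "0 < d" "d \<le> 1/40" "4 * d < e"
    using \<open>e > 0\<close> by (auto simp: d_def min_def)
  have "band_gauge s' (block_stretch (\<lambda>_. s) (\<lambda>_. s') x) < e" if x: "band_gauge s x < d" for x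
  proof -
    consider "\<bar>x\<bar> < d" | "1 \<le> x" "1 / (1 + x) < d" "\<exists>y\<in>shape_set 2 (\<lambda>_. s). \<bar>x - y\<bar> < d \<and> \<lfloor>x\<rfloor> = \<lfloor>y\<rfloor>"
      using band_gauge_less[OF _ s(2) x d(2)] s(1) by fastforce
    then show ?thesis
    proof cases
      case 1
      then have "block_stretch (\<lambda>_. s) (\<lambda>_. s') x = x"
        using d by (intro block_stretch_eq_self) auto
      then show ?thesis
        using 1 d by (simp add: band_gauge_def)
    next
      case 2
      then show ?thesis
        using band_gauge_block_stretch_less[OF s s' 2(1,2)] d(3) by force
    qed
  qed
  then show "\<exists>d>0. \<forall>x. band_gauge s x < d \<longrightarrow> band_gauge s' (block_stretch (\<lambda>_. s) (\<lambda>_. s') x) < e"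
    using d(1) by blast
qed

lemma homeomorphic_band_topologies:
  assumes "1/100 \<le> s" "s \<le> 1/50" "1/100 \<le> s'" "s' \<le> 1/50"
  shows "band_topology s homeomorphic_space band_topology s'"
  unfolding band_topology_def
proof (rule homeomorphic_gauge_topologies)
  show "homeomorphism UNIV UNIV (block_stretch (\<lambda>_. s) (\<lambda>_. s')) (block_stretch (\<lambda>_. s') (\<lambda>_. s))"
    using assms by (intro homeomorphism_block_stretch admissible_radii_const) auto
qed (use assms in \<open>simp_all add: block_stretch_eq_self gauge_compatible_band_gauge\<close>)

lemma shape_topology_le_band_topology:
  assumes "\<And>n. 1/5 \<le> r n" "0 \<le> s" "s \<le> 1/50"
  shows "top_le (shape_topology i r) (band_topology s)"
  unfolding shape_topology_def tail_topology_def band_topology_def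
proof (rule gauge_topology_le)
  show "gauge_compatible (band_gauge s) (tail_gauge (shape_set i r)) id"
    unfolding gauge_compatible_def
  proof (intro allI impI)
    fix e :: real assume "e > 0"
    define d where "d = min (1/40) (e/2)"
    have d: "0 < d" "d \<le> 1/40" "2 * d \<le> e"
      using \<open>e > 0\<close> by (auto simp: d_def min_def)
    have "tail_gauge (shape_set i r) x < e" if x: "band_gauge s x < d" for x
    proof -
      consider "\<bar>x\<bar> < d" | "1 \<le> x" "1 / (1 + x) < d" "\<exists>y\<in>shape_set 2 (\<lambda>_. s). \<bar>x - y\<bar> < d \<and> \<lfloor>x\<rfloor> = \<lfloor>y\<rfloor>"
        using band_gauge_less[OF assms(2,3) x d(2)] by fastforce
      then show ?thesis
      proof cases
        case 1
        then have "x \<notin> shape_set i r"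
          using d shape_set_subset by fastforce
        then show ?thesis
          using 1 d by (simp add: tail_gauge_def)
      next
        case 2
        then have "\<bar>block_offset x\<bar> < r (block_index x)"
          using block_offset_near_band assms(1)[of "block_index x"] assms(3) d by fastforce
        then have "x \<in> shape_set i r"
          using 2(1) by (simp add: shape_set_def window_if_abs_less)
        moreover have "1 / x \<le> 2 / (1 + x)"
          using 2(1) by (simp add: field_simps)
        ultimately show ?thesis
          using 2(2) d by (simp add: tail_gauge_def)
      qed
    qed
    then show "\<exists>d>0. \<forall>x. band_gauge s x < d \<longrightarrow> tail_gauge (shape_set i r) (id x) < e"
      using d(1) by auto
  qed
qed

section \<open>The four chains\<close>

(* For large n the first parameter decides which radius is larger, and for equal first parameters
   the second one does; this is how the radii realise the lexicographic order. *)
definition radii :: "real \<times> real \<Rightarrow> nat \<Rightarrow> real" where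
  "radii p n = 1/5 + fst p / 10 + snd p / (20 * (real n + 1))"

definition lex_less :: "real \<times> real \<Rightarrow> real \<times> real \<Rightarrow> bool" where
  "lex_less p q \<longleftrightarrow> fst p < fst q \<or> (fst p = fst q \<and> snd p < snd q)"

lemma lex_less_trichotomy: "p \<noteq> q \<Longrightarrow> lex_less p q \<or> lex_less q p"
  by (cases p; cases q) (auto simp: lex_less_def)

lemma radii_bounds:
  assumes "p \<in> {0<..<1} \<times> {0<..<1}"
  shows "1/5 \<le> radii p n" "radii p n \<le> 2/5"
proof -
  have p: "0 < fst p" "fst p < 1" "0 < snd p" "snd p < 1"
    using assms by auto
  have "snd p / (20 * (real n + 1)) \<le> 1 / 20"
    using p by (intro frac_le) auto
  moreover have "0 \<le> snd p / (20 * (real n + 1))"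
    using p by simp
  ultimately show "1/5 \<le> radii p n" "radii p n \<le> 2/5"
    using p unfolding radii_def by linarith+
qed

lemma admissible_radii_radii:
  assumes "p \<in> {0<..<1} \<times> {0<..<1}"
  shows "admissible_radii (radii p)"
  unfolding admissible_radii_def
proof
  fix n
  show "0 < radii p n \<and> radii p n \<le> 2/5"
    using radii_bounds[OF assms, of n] by linarith
qed

lemma radii_eventually_less:
  assumes "lex_less p q" "p \<in> {0<..<1} \<times> {0<..<1}" "q \<in> {0<..<1} \<times> {0<..<1}"
  obtains M where "\<And>n. M < n \<Longrightarrow> radii p n < radii q n"
proof (cases "fst p < fst q")
  case True
  obtain M :: nat where M: "1 / (fst q - fst p) < real M"
    using reals_Archimedean2 by blast
  have "radii p n < radii q n" if "M < n" for n
  proof -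
    have "1 / (fst q - fst p) < real n + 1"
      using M that by linarith
    then have "1 < (fst q - fst p) * (real n + 1)"
      using True by (simp add: divide_less_eq mult.commute)
    then have "1 / (20 * (real n + 1)) < (fst q - fst p) / 10"
      by (simp add: field_simps)
    moreover have "(snd p - snd q) / (20 * (real n + 1)) < 1 / (20 * (real n + 1))"
      using assms(2,3) by (intro divide_strict_right_mono) auto
    ultimately show ?thesis
      by (simp add: radii_def diff_divide_distrib)
  qed
  then show ?thesis
    using that by blast
next
  case False
  then have "fst p = fst q" "snd p < snd q"
    using assms(1) by (auto simp: lex_less_def)
  then have "radii p n < radii q n" for n
    by (simp add: radii_def divide_strict_right_mono)
  then show ?thesis
    using that by blast
qed

lemma shape_topology_lex_less:
  assumes "lex_less p q" "p \<in> {0<..<1} \<times> {0<..<1}" "q \<in> {0<..<1} \<times> {0<..<1}"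
  shows "top_le (shape_topology j (radii q)) (shape_topology i (radii p))"
    and "\<not> top_le (shape_topology i (radii p)) (shape_topology j (radii q))"
proof -
  obtain M where M: "\<And>n. M < n \<Longrightarrow> radii p n < radii q n"
    using radii_eventually_less[OF assms] by blast
  show "top_le (shape_topology j (radii q)) (shape_topology i (radii p))"
    using M by (rule shape_topology_le)
  show "\<not> top_le (shape_topology i (radii p)) (shape_topology j (radii q))"
    using admissible_radii_radii[OF assms(2)] admissible_radii_radii[OF assms(3)] M
    by (rule not_shape_topology_le)
qed

lemma top_le_refl: "top_le X X"
  by (simp add: top_le_def)

definition homogeneous_L0_chain :: "real topology set \<Rightarrow> bool" where
  "homogeneous_L0_chain K \<longleftrightarrow> K \<subseteq> L0_family \<and> top_chain K \<and> K \<approx> (UNIV :: real set) \<and>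
     (\<forall>\<tau>\<in>K. \<forall>\<sigma>\<in>K. \<tau> homeomorphic_space \<sigma>)"

definition band_chain :: "real topology set" where
  "band_chain = band_topology ` {1/100<..<1/50}"

lemma top_chain_band_chain: "top_chain band_chain"
  unfolding top_chain_def band_chain_def
proof (intro ballI)
  fix X Y assume "X \<in> band_topology ` {1/100<..<1/50}" "Y \<in> band_topology ` {1/100<..<1/50}"
  then obtain s s' where "s \<in> {1/100<..<1/50}" "s' \<in> {1/100<..<1/50}"
    "X = band_topology s" "Y = band_topology s'"
    by blast
  then show "top_le X Y \<or> top_le Y X"
    using band_topology_le[of s s'] band_topology_le[of s' s] by (cases "s \<le> s'") auto
qed

lemma band_chain_eqpoll: "band_chain \<approx> (UNIV :: real set)"
proof -
  have "inj_on band_topology {1/100<..<1/50}"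
  proof (rule inj_onI)
    fix s s' :: real assume s: "s \<in> {1/100<..<1/50}" "s' \<in> {1/100<..<1/50}"
      and eq: "band_topology s = band_topology s'"
    show "s = s'"
    proof (rule ccontr)
      assume "s \<noteq> s'"
      then consider "s < s'" | "s' < s"
        by linarith
      then show False
        using not_band_topology_le[of s s'] not_band_topology_le[of s' s] s eq top_le_refl
        by cases auto
    qed
  qed
  then have "band_chain \<approx> {1/100<..<1/50::real}"
    unfolding band_chain_def by (rule inj_on_image_eqpoll_self)
  also have "\<dots> \<approx> (UNIV :: real set)"
    by (simp add: open_interval_eqpoll_reals)
  finally show ?thesis .
qed

lemma homogeneous_L0_chain_band_chain: "homogeneous_L0_chain band_chain"
  unfolding homogeneous_L0_chain_def
  using top_chain_band_chain band_chain_eqpoll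
  by (auto simp: band_chain_def band_topology_in_L0_family intro: homeomorphic_band_topologies)

lemma completely_metrizable_band_chain: "\<tau> \<in> band_chain \<Longrightarrow> completely_metrizable_space \<tau>"
  by (auto simp: band_chain_def completely_metrizable_band_topology)

locale dense_parameter_sets =
  fixes Q :: "nat \<Rightarrow> real set"
  assumes countable_Q: "countable (Q i)"
    and Q_subset: "Q i \<subseteq> {0<..<1}"
    and Q_dense: "\<And>a b. 0 \<le> a \<Longrightarrow> a < b \<Longrightarrow> b \<le> 1 \<Longrightarrow> \<exists>u\<in>Q i. a < u \<and> u < b"
    and Q_disjoint: "i \<noteq> j \<Longrightarrow> Q i \<inter> Q j = {}"
begin

definition parameters :: "nat \<Rightarrow> (real \<times> real) set" where
  "parameters i = {0<..<1} \<times> Q i"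

definition shape_chain :: "nat \<Rightarrow> real topology set" where
  "shape_chain i = (\<lambda>p. shape_topology i (radii p)) ` parameters i"

lemma parameters_subset: "p \<in> parameters i \<Longrightarrow> p \<in> {0<..<1} \<times> {0<..<1}"
  using Q_subset by (auto simp: parameters_def)

lemma same_parameter: "p \<in> parameters i \<Longrightarrow> p \<in> parameters j \<Longrightarrow> i = j"
  using Q_disjoint by (auto simp: parameters_def)

lemma shape_topologies_comparable:
  assumes "p \<in> parameters i" "q \<in> parameters j"
  shows "top_le (shape_topology i (radii p)) (shape_topology j (radii q)) \<or>
    top_le (shape_topology j (radii q)) (shape_topology i (radii p))"
proof (cases "p = q")
  case True
  then show ?thesis
    using same_parameter assms top_le_refl by metis
next
  case False
  then consider "lex_less p q" | "lex_less q p"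
    using lex_less_trichotomy by blast
  then show ?thesis
    using shape_topology_lex_less(1) parameters_subset assms by cases blast+
qed

lemma top_chain_shape_chains: "top_chain (\<Union>i\<in>I. shape_chain i)"
  unfolding top_chain_def
proof (intro ballI)
  fix X Y assume "X \<in> (\<Union>i\<in>I. shape_chain i)" "Y \<in> (\<Union>i\<in>I. shape_chain i)"
  then obtain i j p q where "p \<in> parameters i" "q \<in> parameters j"
    "X = shape_topology i (radii p)" "Y = shape_topology j (radii q)"
    by (auto simp: shape_chain_def)
  then show "top_le X Y \<or> top_le Y X"
    using shape_topologies_comparable by simp
qed

lemma parameters_dense:
  assumes "lex_less q p" "p \<in> parameters i" "q \<in> parameters j"
  obtains r where "r \<in> parameters k" "lex_less q r" "lex_less r p"
proof (cases "fst q < fst p")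
  case True
  obtain u where "u \<in> Q k"
    using Q_dense[of 0 1 k] by auto
  then show ?thesis
    using True parameters_subset[OF assms(2)] parameters_subset[OF assms(3)]
    by (intro that[of "((fst q + fst p) / 2, u)"]) (auto simp: parameters_def lex_less_def)
next
  case False
  then have "fst q = fst p" "snd q < snd p"
    using assms(1) by (auto simp: lex_less_def)
  moreover obtain u where "u \<in> Q k" "snd q < u" "u < snd p"
    using Q_dense[OF _ \<open>snd q < snd p\<close>] parameters_subset[OF assms(2)]
      parameters_subset[OF assms(3)] by fastforce
  ultimately show ?thesis
    using parameters_subset[OF assms(2)]
    by (intro that[of "(fst p, u)"]) (auto simp: parameters_def lex_less_def)
qed

lemma top_dense_in_shape_chains: "top_dense_in (shape_chain k) (\<Union>i\<in>I. shape_chain i)"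
  unfolding top_dense_in_def
proof (intro ballI impI)
  fix X Y assume "X \<in> (\<Union>i\<in>I. shape_chain i)" "Y \<in> (\<Union>i\<in>I. shape_chain i)" and XY: "top_le X Y \<and> X \<noteq> Y"
  then obtain i j p q where p: "p \<in> parameters i" and q: "q \<in> parameters j"
    and X: "X = shape_topology i (radii p)" and Y: "Y = shape_topology j (radii q)"
    by (auto simp: shape_chain_def)
  have "p \<noteq> q"
    using same_parameter[OF p] q X Y XY by blast
  moreover have "\<not> lex_less p q"
    using shape_topology_lex_less(2) parameters_subset p q X Y XY by blast
  ultimately have "lex_less q p"
    using lex_less_trichotomy by blast
  then obtain r where r: "r \<in> parameters k" "lex_less q r" "lex_less r p"
    using p q by (rule parameters_dense)
  define Z where "Z = shape_topology k (radii r)"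
  have "top_le X Z" "\<not> top_le Z X" "top_le Z Y" "\<not> top_le Y Z"
    using shape_topology_lex_less[OF r(3)] shape_topology_lex_less[OF r(2)]
      parameters_subset[OF r(1)] parameters_subset[OF p] parameters_subset[OF q]
    by (simp_all add: X Y Z_def)
  moreover have "Z \<in> shape_chain k"
    using r(1) by (simp add: Z_def shape_chain_def)
  ultimately show "\<exists>Z\<in>shape_chain k - {X, Y}. top_le X Z \<and> top_le Z Y"
    using top_le_refl by (intro bexI[of _ Z]) auto
qed

lemma shape_chainE:
  assumes "\<tau> \<in> shape_chain i"
  obtains r where "admissible_radii r" "\<And>n. 1/5 \<le> r n" "\<tau> = shape_topology i r"
proof -
  obtain p where p: "p \<in> parameters i" "\<tau> = shape_topology i (radii p)"
    using assms by (auto simp: shape_chain_def)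
  show ?thesis
    using that[OF admissible_radii_radii radii_bounds(1) p(2)] parameters_subset[OF p(1)] by blast
qed

lemma inj_on_shape_topology: "inj_on (\<lambda>p. shape_topology i (radii p)) (parameters i)"
proof (rule inj_onI)
  fix p q assume p: "p \<in> parameters i" and q: "q \<in> parameters i"
    and eq: "shape_topology i (radii p) = shape_topology i (radii q)"
  show "p = q"
  proof (rule ccontr)
    assume "p \<noteq> q"
    then consider "lex_less p q" | "lex_less q p"
      using lex_less_trichotomy by blast
    then show False
    proof cases
      case 1
      then show False
        using shape_topology_lex_less(2)[OF 1 parameters_subset[OF p] parameters_subset[OF q], of i i] eq
        by (simp add: top_le_refl)
    next
      case 2
      then show False
        using shape_topology_lex_less(2)[OF 2 parameters_subset[OF q] parameters_subset[OF p], of i i] eq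
        by (simp add: top_le_refl)
    qed
  qed
qed

lemma parameters_eqpoll: "parameters i \<approx> (UNIV :: real set)"
proof (rule lepoll_antisym)
  define f where "f p = fst p + real (to_nat_on (Q i) (snd p))" for p
  have floor_f: "\<lfloor>f p\<rfloor> = int (to_nat_on (Q i) (snd p))" if "p \<in> parameters i" for p
    using parameters_subset[OF that] by (intro floor_unique) (auto simp: f_def)
  have "inj_on f (parameters i)"
  proof (rule inj_onI)
    fix p q assume p: "p \<in> parameters i" and q: "q \<in> parameters i" and "f p = f q"
    then have "to_nat_on (Q i) (snd p) = to_nat_on (Q i) (snd q)"
      using floor_f by (metis of_nat_eq_iff)
    moreover have "snd p \<in> Q i" "snd q \<in> Q i"
      using p q by (auto simp: parameters_def)
    ultimately have "snd p = snd q"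
      using inj_on_to_nat_on[OF countable_Q] by (auto dest: inj_onD)
    then show "p = q"
      using \<open>f p = f q\<close> by (simp add: f_def prod_eq_iff)
  qed
  then show "parameters i \<lesssim> (UNIV :: real set)"
    unfolding lepoll_def by (intro exI[of _ f]) simp
  obtain u where "u \<in> Q i"
    using Q_dense[of 0 1 i] by auto
  then have "{0<..<1::real} \<lesssim> parameters i"
    unfolding lepoll_def parameters_def by (intro exI[of _ "\<lambda>x. (x, u)"]) (auto simp: inj_on_def)
  moreover have "(UNIV :: real set) \<approx> {0<..<1::real}"
    using open_interval_eqpoll_reals[of 0 1] by (simp add: eqpoll_sym)
  ultimately show "(UNIV :: real set) \<lesssim> parameters i"
    by (meson eqpoll_imp_lepoll lepoll_trans)
qed

lemma shape_chain_eqpoll: "shape_chain i \<approx> (UNIV :: real set)"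
  unfolding shape_chain_def
  using inj_on_image_eqpoll_self[OF inj_on_shape_topology] parameters_eqpoll by (rule eqpoll_trans)

lemma shape_chain_homeomorphic:
  "\<tau> \<in> shape_chain i \<Longrightarrow> \<sigma> \<in> shape_chain i \<Longrightarrow> \<tau> homeomorphic_space \<sigma>"
  by (elim shape_chainE) (simp add: homeomorphic_shape_topologies)

lemma homogeneous_L0_chain_shape_chain: "homogeneous_L0_chain (shape_chain i)"
  unfolding homogeneous_L0_chain_def
  using top_chain_shape_chains[of "{i}"] shape_chain_eqpoll shape_chain_homeomorphic
  by (auto simp: shape_chain_def shape_topology_in_L0_family)

lemma shape_chain_0: "\<tau> \<in> shape_chain 0 \<Longrightarrow> second_countable \<tau> \<and> \<not> regular_space \<tau>"
  by (auto elim!: shape_chainE simp: second_countable_shape_topology not_regular_shape_topology)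

lemma shape_chain_1: "\<tau> \<in> shape_chain 1 \<Longrightarrow> \<not> regular_space \<tau> \<and> \<not> first_countable \<tau>"
  by (auto elim!: shape_chainE simp: not_regular_shape_topology not_first_countable_shape_topology)

lemma shape_chain_2: "\<tau> \<in> shape_chain 2 \<Longrightarrow> hereditarily normal_space \<tau> \<and> \<not> first_countable \<tau>"
  by (auto elim!: shape_chainE simp: not_first_countable_shape_topology hereditarily_normal_shape_topology)

lemma shape_chain_le_band_chain: "\<tau> \<in> shape_chain i \<Longrightarrow> \<sigma> \<in> band_chain \<Longrightarrow> top_le \<tau> \<sigma>"
  by (auto elim!: shape_chainE simp: band_chain_def intro!: shape_topology_le_band_topology)

lemma shape_chains_012:
  "top_chain (shape_chain 0 \<union> shape_chain 1 \<union> shape_chain 2)"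
  "top_dense_in (shape_chain k) (shape_chain 0 \<union> shape_chain 1 \<union> shape_chain 2)"
proof -
  have "shape_chain 0 \<union> shape_chain 1 \<union> shape_chain 2 = (\<Union>i\<in>{0, 1, 2}. shape_chain i)"
    by auto
  then show "top_chain (shape_chain 0 \<union> shape_chain 1 \<union> shape_chain 2)"
    "top_dense_in (shape_chain k) (shape_chain 0 \<union> shape_chain 1 \<union> shape_chain 2)"
    by (simp_all only: top_chain_shape_chains top_dense_in_shape_chains)
qed
end

lemma dense_parameter_sets_exist: "\<exists>Q. dense_parameter_sets Q"
proof -
  obtain c :: real where "c \<notin> \<rat>"
    using uncountable_UNIV_real countable_rat by (metis countable_subset subsetI)
  define Q where "Q i = (\<lambda>q. q + real i * c) ` \<rat> \<inter> {0<..<1}" for i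
  have "dense_parameter_sets Q"
  proof
    show "countable (Q i)" "Q i \<subseteq> {0<..<1}" for i
      by (simp_all add: Q_def countable_rat)
    show "\<exists>u\<in>Q i. a < u \<and> u < b" if "0 \<le> a" "a < b" "b \<le> 1" for a b i
    proof -
      obtain q where "q \<in> \<rat>" "a - real i * c < q" "q < b - real i * c"
        using Rats_dense_in_real[of "a - real i * c" "b - real i * c"] \<open>a < b\<close> by auto
      then show ?thesis
        using that by (intro bexI[of _ "q + real i * c"]) (auto simp: Q_def)
    qed
    show "Q i \<inter> Q j = {}" if "i \<noteq> j" for i j
    proof (rule ccontr)
      assume "Q i \<inter> Q j \<noteq> {}"
      then obtain q q' where "q \<in> \<rat>" "q' \<in> \<rat>" "q + real i * c = q' + real j * c"
        by (auto simp: Q_def)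
      then have "c = (q' - q) / (real i - real j)"
        using that by (simp add: field_simps)
      then show False
        using \<open>q \<in> \<rat>\<close> \<open>q' \<in> \<rat>\<close> \<open>c \<notin> \<rat>\<close> by simp
    qed
  qed
  then show ?thesis
    by blast
qed

theorem theorem7:
  shows "\<exists>K0 K1 K2 K3 :: real topology set.
    (\<forall>K \<in> {K0, K1, K2, K3}.
        K \<subseteq> L0_family \<and> top_chain K \<and> K \<approx> (UNIV :: real set) \<and>
        (\<forall>\<tau>\<in>K. \<forall>\<sigma>\<in>K. \<tau> homeomorphic_space \<sigma>)) \<and>
    (\<forall>\<tau>\<in>K0. second_countable \<tau> \<and> \<not> regular_space \<tau>) \<and>
    (\<forall>\<tau>\<in>K1. \<not> regular_space \<tau> \<and> \<not> first_countable \<tau>) \<and>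
    (\<forall>\<tau>\<in>K2. hereditarily normal_space \<tau> \<and> \<not> first_countable \<tau>) \<and>
    (\<forall>\<tau>\<in>K3. completely_metrizable_space \<tau>) \<and>
    top_chain (K0 \<union> K1 \<union> K2) \<and>
    (\<forall>K \<in> {K0, K1, K2}. top_dense_in K (K0 \<union> K1 \<union> K2)) \<and>
    (\<forall>\<tau>\<in>K0 \<union> K1 \<union> K2. \<forall>\<sigma>\<in>K3. top_le \<tau> \<sigma>)"
proof -
  obtain Q where "dense_parameter_sets Q"
    using dense_parameter_sets_exist by blast
  then interpret dense_parameter_sets Q .
  show ?thesis
    by (rule exI[of _ "shape_chain 0"], rule exI[of _ "shape_chain 1"], rule exI[of _ "shape_chain 2"],
        rule exI[of _ band_chain])
      (use homogeneous_L0_chain_shape_chain homogeneous_L0_chain_band_chain shape_chain_0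
        shape_chain_1 shape_chain_2 completely_metrizable_band_chain shape_chains_012
        shape_chain_le_band_chain in \<open>auto simp: homogeneous_L0_chain_def\<close>)
qed

end
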